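(* Let $k\ge l\ge0$ be integers. Let $\alpha_1,\alpha_2\in\{0,\dots,l\}$ and $\beta_n\in\{0,\dots,l-\alpha_n\}$ for $n=1,2$, with $(\alpha_1,\beta_1)\neq(\alpha_2,\beta_2)$. Then $$[C^{\alpha_1}S_u^{\beta_1}H,\;C^{\alpha_2}S_u^{\beta_2}G]_F=0$$ for all $H\in\mathcal{H}_{k-\alpha_1+\beta_1,\,l-\alpha_1-\beta_1}(\mathbb{R}^{2m},\mathbb{C})$ and $G\in\mathcal{H}_{k-\alpha_2+\beta_2,\,l-\alpha_2-\beta_2}(\mathbb{R}^{2m},\mathbb{C})$.
   Context: Fix an integer $m>4$. For $x,u\in\mathbb{R}^m$ let $\mathcal{P}_{p,q}(\mathbb{R}^{2m},\mathbb{C})$ be complex polynomials of degree $p$ in $x$ and $q$ in $u$. The Fischer inner product is $[P,Q]_F=\overline{P}(\partial_x,\partial_u)Q(x,u)\big|_{x=u=0}$ ($\overline{P}(\partial_x,\partial_u)$: conjugate coefficients of $P$ and replace $x_j,u_j$ by $\partial_{x_j},\partial_{u_j}$). Write $|x|^2=\sum x_j^2$, $\langle u,x\rangle=\sum u_jx_j$, $\Delta_x=\sum\partial_{x_j}^2$, $\Delta_u=\sum\partial_{u_j}^2$, $\langle\partial_u,\partial_x\rangle=\sum\partial_{u_j}\partial_{x_j}$, $\langle x,\partial_u\rangle=\sum x_j\partial_{u_j}$, $\langle u,\partial_x\rangle=\sum u_j\partial_{x_j}$, $\ker(D_1,\dots,D_r)=\bigcap\ker D_i$. Every $P\in\mathcal{P}_{p,q}$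 is uniquely $\sum_{a,b\ge0}|x|^{2a}|u|^{2b}H'_{p-2a,q-2b}$ with $H'_{p-2a,q-2b}\in\mathcal{P}_{p-2a,q-2b}\cap\ker(\Delta_x,\Delta_u)$; $\pi_{\mathfrak{s}}P:=H'_{p,q}$. On $\ker(\Delta_x,\Delta_u)$: $S_u=\pi_{\mathfrak{s}}\langle u,\partial_x\rangle$, $C=\pi_{\mathfrak{s}}\langle u,x\rangle$. For $a\ge b\ge0$, $\mathcal{H}_{a,b}=\mathcal{P}_{a,b}\cap\ker(\Delta_x,\Delta_u,\langle\partial_u,\partial_x\rangle,\langle x,\partial_u\rangle)$. *)

theory Defs
  imports Complex_Main "HOL-Library.Poly_Mapping"
begin

(* Complex polynomials in the 2m real variables x_1..x_m, u_1..u_m.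
   Variables are indexed by nat: x_{j+1} is variable j (j < m), u_{j+1} is variable m + j. *)
type_synonym cpoly = "(nat \<Rightarrow>\<^sub>0 nat) \<Rightarrow>\<^sub>0 complex"

definition pvar :: "nat \<Rightarrow> cpoly" where
  "pvar i = Poly_Mapping.single (Poly_Mapping.single i 1) 1"

definition pderiv_var :: "nat \<Rightarrow> cpoly \<Rightarrow> cpoly" where
  "pderiv_var i P = (\<Sum>(a::nat \<Rightarrow>\<^sub>0 nat)\<in>Poly_Mapping.keys P.
      Poly_Mapping.single (a - Poly_Mapping.single i 1) (of_nat (Poly_Mapping.lookup a i) * Poly_Mapping.lookup P a :: complex))"

definition pderiv_mono :: "(nat \<Rightarrow>\<^sub>0 nat) \<Rightarrow> cpoly \<Rightarrow> cpoly" where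
  "pderiv_mono a Q = foldr (\<lambda>i R. (pderiv_var i ^^ Poly_Mapping.lookup a i) R) (sorted_list_of_set (Poly_Mapping.keys a)) Q"

definition fischer :: "cpoly \<Rightarrow> cpoly \<Rightarrow> complex" where
  "fischer P Q = (\<Sum>a\<in>Poly_Mapping.keys P. cnj (Poly_Mapping.lookup P a) * Poly_Mapping.lookup (pderiv_mono a Q) 0)"

definition Pspace :: "nat \<Rightarrow> nat \<Rightarrow> nat \<Rightarrow> cpoly set" where
  "Pspace m p q = {P. \<forall>a\<in>Poly_Mapping.keys P. Poly_Mapping.keys a \<subseteq> {..<2*m}
      \<and> (\<Sum>j<m. Poly_Mapping.lookup a j) = p \<and> (\<Sum>j<m. Poly_Mapping.lookup a (m + j)) = q}"

definition lap_x :: "nat \<Rightarrow> cpoly \<Rightarrow> cpoly" where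
  "lap_x m P = (\<Sum>j<m. pderiv_var j (pderiv_var j P))"

definition lap_u :: "nat \<Rightarrow> cpoly \<Rightarrow> cpoly" where
  "lap_u m P = (\<Sum>j<m. pderiv_var (m + j) (pderiv_var (m + j) P))"

definition du_dx :: "nat \<Rightarrow> cpoly \<Rightarrow> cpoly" where
  "du_dx m P = (\<Sum>j<m. pderiv_var (m + j) (pderiv_var j P))"

definition x_du :: "nat \<Rightarrow> cpoly \<Rightarrow> cpoly" where
  "x_du m P = (\<Sum>j<m. pvar j * pderiv_var (m + j) P)"

definition u_dx :: "nat \<Rightarrow> cpoly \<Rightarrow> cpoly" where
  "u_dx m P = (\<Sum>j<m. pvar (m + j) * pderiv_var j P)"

definition normsq_x :: "nat \<Rightarrow> cpoly" where
  "normsq_x m = (\<Sum>j<m. pvar j ^ 2)"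

definition normsq_u :: "nat \<Rightarrow> cpoly" where
  "normsq_u m = (\<Sum>j<m. pvar (m + j) ^ 2)"

definition ux :: "nat \<Rightarrow> cpoly" where
  "ux m = (\<Sum>j<m. pvar (m + j) * pvar j)"

definition Harm :: "nat \<Rightarrow> nat \<Rightarrow> nat \<Rightarrow> cpoly set" where
  "Harm m p q = {P \<in> Pspace m p q. lap_x m P = 0 \<and> lap_u m P = 0}"

definition pi_s :: "nat \<Rightarrow> cpoly \<Rightarrow> cpoly" where
  "pi_s m P = (THE h. \<exists>p q H. P \<in> Pspace m p q
      \<and> (\<forall>a b. H a b \<in> Harm m (p - 2*a) (q - 2*b))
      \<and> P = (\<Sum>a\<le>p div 2. \<Sum>b\<le>q div 2. normsq_x m ^ a * normsq_u m ^ b * H a b)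
      \<and> h = H 0 0)"

definition S_u :: "nat \<Rightarrow> cpoly \<Rightarrow> cpoly" where
  "S_u m P = pi_s m (u_dx m P)"

definition C_op :: "nat \<Rightarrow> cpoly \<Rightarrow> cpoly" where
  "C_op m P = pi_s m (ux m * P)"

definition Hspace :: "nat \<Rightarrow> nat \<Rightarrow> nat \<Rightarrow> cpoly set" where
  "Hspace m a b = {P \<in> Pspace m a b. lap_x m P = 0 \<and> lap_u m P = 0
      \<and> du_dx m P = 0 \<and> x_du m P = 0}"

end

theory Submission
  imports Defs
begin

text \<open>
  For the Fischer product, multiplication by a variable is adjoint to differentiation in that
  variable. Hence the ideal generated by \<open>|x|\<^sup>2\<close> and \<open>|u|\<^sup>2\<close> is orthogonal to
  \<open>ker(\<Delta>\<^sub>x, \<Delta>\<^sub>u)\<close>, a harmonic element of that ideal vanishes, and \<open>\<pi>\<^sub>s P\<close> is the unique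
  harmonic polynomial congruent to \<open>P\<close> modulo the ideal. This gives closed formulas for
  \<open>S\<^sub>u\<close>, \<open>S\<^sub>x = \<pi>\<^sub>s \<langle>x,\<partial>\<^sub>u\<rangle>\<close> and \<open>C\<close> on harmonic polynomials (for \<open>m > 2\<close>), and, computing
  modulo the ideal, the relations: \<open>S\<^sub>u C\<close> and \<open>S\<^sub>x C\<close> are multiples of \<open>C S\<^sub>u\<close> and \<open>C S\<^sub>x\<close>,
  while \<open>\<langle>\<partial>\<^sub>u,\<partial>\<^sub>x\<rangle> C\<close> is a combination of \<open>C \<langle>\<partial>\<^sub>u,\<partial>\<^sub>x\<rangle>\<close>, the identity, \<open>S\<^sub>x S\<^sub>u\<close> and \<open>S\<^sub>u S\<^sub>x\<close>.

  For \<open>G \<in> \<H>(a,b)\<close> put \<open>g(i,j) = C\<^sup>i S\<^sub>u\<^sup>j G\<close>. By these relations \<open>\<langle>\<partial>\<^sub>u,\<partial>\<^sub>x\<rangle> g(i+1,j)\<close> is a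
  multiple of \<open>g(i,j)\<close>, \<open>\<langle>\<partial>\<^sub>u,\<partial>\<^sub>x\<rangle> g(0,j) = 0\<close>, and \<open>\<langle>x,\<partial>\<^sub>u\<rangle> g(0,j+1)\<close> is a multiple of \<open>g(0,j)\<close>.
  On harmonic polynomials \<open>C\<close> is adjoint to \<open>\<langle>\<partial>\<^sub>u,\<partial>\<^sub>x\<rangle>\<close>, and on \<open>ker \<langle>\<partial>\<^sub>u,\<partial>\<^sub>x\<rangle>\<close> the operator
  \<open>S\<^sub>u\<close> is \<open>\<langle>u,\<partial>\<^sub>x\<rangle>\<close>, adjoint to \<open>\<langle>x,\<partial>\<^sub>u\<rangle>\<close>. Moving these operators across the product
  one at a time reduces \<open>[g(i,j), g'(i',j')]\<^sub>F\<close> with \<open>(i,j) \<noteq> (i',j')\<close> to a multiple of a product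
  with \<open>\<langle>\<partial>\<^sub>u,\<partial>\<^sub>x\<rangle>\<close> or \<open>\<langle>x,\<partial>\<^sub>u\<rangle>\<close> applied to an element of \<open>\<H>\<close>, which vanishes.
\<close>

section \<open>Partial derivatives\<close>

abbreviation lookup :: "('a \<Rightarrow>\<^sub>0 'b::zero) \<Rightarrow> 'a \<Rightarrow> 'b" where "lookup \<equiv> Poly_Mapping.lookup"

abbreviation var_exp :: "nat \<Rightarrow> (nat \<Rightarrow>\<^sub>0 nat)" where "var_exp i \<equiv> Poly_Mapping.single i (Suc 0)"

definition pconst :: "complex \<Rightarrow> cpoly" where "pconst c = Poly_Mapping.single 0 c"

lemma lookup_diff_nat: "lookup (a - b) k = lookup a k - lookup (b :: nat \<Rightarrow>\<^sub>0 nat) k"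
  by (simp add: minus_poly_mapping.rep_eq)

lemma poly_mapping_sum_single: "P = (\<Sum>a\<in>Poly_Mapping.keys P. Poly_Mapping.single a (lookup P a))"
proof (rule poly_mapping_eqI)
  fix k
  show "lookup P k = lookup (\<Sum>a\<in>Poly_Mapping.keys P. Poly_Mapping.single a (lookup P a)) k"
    by (simp add: lookup_sum lookup_single when_def in_keys_iff)
qed

lemma diff_var_exp_add_cancel: "lookup a i \<ge> 1 \<Longrightarrow> a - var_exp i + var_exp i = a"
  by (rule poly_mapping_eqI) (auto simp: lookup_add lookup_diff_nat lookup_single when_def)

lemma lookup_pderiv_var: "lookup (pderiv_var i P) c = of_nat (lookup c i + 1) * lookup P (c + var_exp i)"
proof -
  have "lookup (pderiv_var i P) c = (\<Sum>a\<in>Poly_Mapping.keys P.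
     (of_nat (lookup a i) * lookup P a when a - var_exp i = c))"
    by (simp add: pderiv_var_def lookup_sum lookup_single)
  also have "\<dots> = (\<Sum>a\<in>Poly_Mapping.keys P. (if a = c + var_exp i then of_nat (lookup c i + 1) * lookup P (c + var_exp i) else 0))"
  proof (rule sum.cong)
    fix a assume "a \<in> Poly_Mapping.keys P"
    show "(of_nat (lookup a i) * lookup P a when a - var_exp i = c) = (if a = c + var_exp i then of_nat (lookup c i + 1) * lookup P (c + var_exp i) else 0)"
    proof (cases "lookup a i = 0")
      case True
      then have "a \<noteq> c + var_exp i" by (auto simp: lookup_add)
      then show ?thesis using True by (simp add: when_def)
    next
      case False
      then have "a - var_exp i = c \<longleftrightarrow> a = c + var_exp i" using diff_var_exp_add_cancel[where i=i and a=a]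
        by (metis add_diff_cancel_right' less_one not_le)
      then show ?thesis by (auto simp: when_def lookup_add)
    qed
  qed simp
  also have "\<dots> = of_nat (lookup c i + 1) * lookup P (c + var_exp i)"
    by (simp add: in_keys_iff)
  finally show ?thesis .
qed

lemma pderiv_var_add: "pderiv_var i (P + Q) = pderiv_var i P + pderiv_var i Q"
  by (rule poly_mapping_eqI) (simp add: lookup_pderiv_var lookup_add algebra_simps)
lemma pderiv_var_zero[simp]: "pderiv_var i 0 = 0"
  by (rule poly_mapping_eqI) (simp add: lookup_pderiv_var)
lemma pderiv_var_diff: "pderiv_var i (P - Q) = pderiv_var i P - pderiv_var i Q"
  by (rule poly_mapping_eqI) (simp add: lookup_pderiv_var lookup_minus algebra_simps)
lemma pderiv_var_uminus: "pderiv_var i (- Q) = - pderiv_var i Q"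
  by (rule poly_mapping_eqI) (simp add: lookup_pderiv_var)
lemma pderiv_var_sum: "pderiv_var i (sum f S) = (\<Sum>x\<in>S. pderiv_var i (f x))"
  by (induction S rule: infinite_finite_induct) (simp_all add: pderiv_var_add)

lemma pderiv_var_single: "pderiv_var i (Poly_Mapping.single a c) = Poly_Mapping.single (a - var_exp i) (of_nat (lookup a i) * c)"
  by (cases "c = 0") (simp_all add: pderiv_var_def)

lemma pderiv_var_mult_single:
  "pderiv_var i (Poly_Mapping.single a c * Poly_Mapping.single b d) =
    pderiv_var i (Poly_Mapping.single a c) * Poly_Mapping.single b d + Poly_Mapping.single a c * pderiv_var i (Poly_Mapping.single b d)"
proof -
  have l: "lookup (a+b) i = lookup a i + lookup b i" by (simp add: lookup_add)
  consider "lookup a i = 0" "lookup b i = 0" | "lookup a i \<ge> 1" "lookup b i = 0"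
     | "lookup a i = 0" "lookup b i \<ge> 1" | "lookup a i \<ge> 1" "lookup b i \<ge> 1" by linarith
  then show ?thesis
  proof cases
    case 1 then show ?thesis by (simp add: mult_single pderiv_var_single l ac_simps)
  next
    case 2
    have "a + b - var_exp i = a - var_exp i + b"
      by (rule poly_mapping_eqI) (use 2 in \<open>auto simp: lookup_add lookup_diff_nat lookup_single when_def\<close>)
    then show ?thesis using 2 by (simp add: mult_single pderiv_var_single l ac_simps)
  next
    case 3
    have "a + b - var_exp i = a + (b - var_exp i)"
      by (rule poly_mapping_eqI) (use 3 in \<open>auto simp: lookup_add lookup_diff_nat lookup_single when_def\<close>)
    then show ?thesis using 3 by (simp add: mult_single pderiv_var_single l ac_simps)
  next
    case 4
    have e1: "a - var_exp i + b = a + b - var_exp i"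
      by (rule poly_mapping_eqI) (use 4 in \<open>auto simp: lookup_add lookup_diff_nat lookup_single when_def\<close>)
    have e2: "a + (b - var_exp i) = a + b - var_exp i"
      by (rule poly_mapping_eqI) (use 4 in \<open>auto simp: lookup_add lookup_diff_nat lookup_single when_def\<close>)
    show ?thesis unfolding pderiv_var_single mult_single e1 e2 l
      by (simp add: algebra_simps flip: single_add)
  qed
qed

lemma pderiv_var_mult: "pderiv_var i (P * Q) = pderiv_var i P * Q + P * pderiv_var i Q"
proof -
  have "pderiv_var i ((\<Sum>a\<in>A. Poly_Mapping.single a (p a)) * (\<Sum>b\<in>B. Poly_Mapping.single b (q b))) =
     pderiv_var i (\<Sum>a\<in>A. Poly_Mapping.single a (p a)) * (\<Sum>b\<in>B. Poly_Mapping.single b (q b))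
     + (\<Sum>a\<in>A. Poly_Mapping.single a (p a)) * pderiv_var i (\<Sum>b\<in>B. Poly_Mapping.single b (q b))"
    for A B and p q :: "(nat \<Rightarrow>\<^sub>0 nat) \<Rightarrow> complex"
    by (simp add: sum_product pderiv_var_sum pderiv_var_mult_single sum.distrib)
  from this[where A="Poly_Mapping.keys P" and p="lookup P" and B="Poly_Mapping.keys Q" and q="lookup Q"]
  show ?thesis
    by (simp only: poly_mapping_sum_single[symmetric])
qed

lemma pderiv_var_commute: "pderiv_var i (pderiv_var j P) = pderiv_var j (pderiv_var i P)"
  by (rule poly_mapping_eqI) (auto simp: lookup_pderiv_var lookup_add lookup_single when_def ac_simps)

lemma pderiv_var_pconst[simp]: "pderiv_var i (pconst c) = 0"
  by (simp add: pconst_def pderiv_var_single)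
lemma pderiv_var_one[simp]: "pderiv_var i 1 = 0"
  using pderiv_var_pconst[of i 1] by (simp add: pconst_def)
lemma pderiv_var_numeral[simp]: "pderiv_var i (numeral n) = 0"
  using pderiv_var_pconst[of i "numeral n"] by (simp add: pconst_def)
lemma pderiv_var_of_nat[simp]: "pderiv_var i (of_nat n) = 0"
  using pderiv_var_pconst[of i "of_nat n"] by (simp add: pconst_def)
lemma pderiv_var_pvar: "pderiv_var i (pvar j) = (if i = j then 1 else 0)"
  by (simp add: pvar_def pderiv_var_single lookup_single when_def)

lemma pconst_mult: "pconst a * pconst b = pconst (a * b)" by (simp add: pconst_def mult_single)
lemma pconst_add: "pconst a + pconst b = pconst (a + b)" by (simp add: pconst_def single_add)
lemma pconst_diff: "pconst a - pconst b = pconst (a - b)" by (simp add: pconst_def single_diff)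
lemma pconst_0[simp]: "pconst 0 = 0" by (simp add: pconst_def)
lemma pconst_1[simp]: "pconst 1 = 1" by (simp add: pconst_def)
lemma pconst_numeral: "pconst (numeral n) = numeral n" by (simp add: pconst_def)
lemma pconst_of_nat: "pconst (of_nat n) = of_nat n" by (simp add: pconst_def)
lemma pconst_mult_pconst_mult[simp]: "pconst a * (pconst b * X) = pconst (a * b) * X"
  by (simp add: mult.assoc[symmetric] pconst_mult)
lemma numeral_mult_pconst_mult[simp]: "numeral n * (pconst b * X) = pconst (numeral n * b) * X"
  by (simp add: mult.assoc[symmetric] pconst_numeral[symmetric] pconst_mult)
lemma numeral_mult_pconst[simp]: "numeral n * pconst b = pconst (numeral n * b)"
  by (simp add: pconst_numeral[symmetric] pconst_mult)
lemma normsq_x_pconst_mult: "normsq_x m * (pconst c * X) = pconst c * (normsq_x m * X)" by (simp add: mult.left_commute)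
lemma normsq_u_pconst_mult: "normsq_u m * (pconst c * X) = pconst c * (normsq_u m * X)" by (simp add: mult.left_commute)
lemma ux_pconst_mult: "ux m * (pconst c * X) = pconst c * (ux m * X)" by (simp add: mult.left_commute)
lemma pderiv_var_pconst_mult: "pderiv_var i (pconst c * P) = pconst c * pderiv_var i P"
  by (simp add: pderiv_var_mult)
lemma lookup_pconst_mult: "lookup (pconst c * P) k = c * lookup P k"
  by (simp add: pconst_def mult_map_scale_conv_mult[symmetric] map.rep_eq when_def)

section \<open>The Fischer product\<close>

lemma lookup_pderiv_var_funpow: "lookup ((pderiv_var i ^^ n) P) c = pochhammer (of_nat (lookup c i + 1)) n * lookup P (c + Poly_Mapping.single i n)"
proof (induction n arbitrary: c)
  case 0 then show ?case by simp
next
  case (Suc n)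
  have "lookup ((pderiv_var i ^^ Suc n) P) c = of_nat (lookup c i + 1) * lookup ((pderiv_var i ^^ n) P) (c + var_exp i)"
    by (simp add: lookup_pderiv_var)
  also have "\<dots> = of_nat (lookup c i + 1) * (pochhammer (of_nat (lookup c i + 1) + 1) n * lookup P (c + var_exp i + Poly_Mapping.single i n))"
    by (simp add: Suc lookup_add)
  also have "c + var_exp i + Poly_Mapping.single i n = c + Poly_Mapping.single i (Suc n)"
    by (simp add: add.assoc flip: single_add)
  finally show ?case by (simp add: pochhammer_rec)
qed

lemma lookup_foldr_pderiv_var:
  assumes "distinct L"
  shows "lookup (foldr (\<lambda>i R. (pderiv_var i ^^ f i) R) L Q) c =
     (\<Prod>i\<in>set L. pochhammer (of_nat (lookup c i + 1)) (f i)) * lookup Q (c + (\<Sum>i\<in>set L. Poly_Mapping.single i (f i)))"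
  using assms
proof (induction L arbitrary: c)
  case Nil then show ?case by simp
next
  case (Cons i L)
  let ?c = "c + Poly_Mapping.single i (f i)"
  let ?F = "\<lambda>i R. (pderiv_var i ^^ f i) R"
  have 2: "(\<Prod>j\<in>set L. pochhammer (of_nat (lookup ?c j + 1)) (f j)) = (\<Prod>j\<in>set L. pochhammer (of_nat (lookup c j + 1)) (f j))"
    by (rule prod.cong) (use Cons in \<open>auto simp: lookup_add lookup_single when_def\<close>)
  have "lookup (foldr ?F (i # L) Q) c = pochhammer (of_nat (lookup c i + 1)) (f i) * lookup (foldr ?F L Q) ?c"
    by (simp add: lookup_pderiv_var_funpow)
  also have "\<dots> = pochhammer (of_nat (lookup c i + 1)) (f i) * ((\<Prod>j\<in>set L. pochhammer (of_nat (lookup ?c j + 1)) (f j))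
      * lookup Q (?c + (\<Sum>j\<in>set L. Poly_Mapping.single j (f j))))"
    using Cons by simp
  also have "\<dots> = (\<Prod>j\<in>set (i # L). pochhammer (of_nat (lookup c j + 1)) (f j)) * lookup Q (c + (\<Sum>j\<in>set (i # L). Poly_Mapping.single j (f j)))"
    using Cons by (simp only: 2) (simp add: add.assoc mult.assoc)
  finally show ?case .
qed

definition multi_fact :: "(nat \<Rightarrow>\<^sub>0 nat) \<Rightarrow> nat" where
  "multi_fact a = (\<Prod>i\<in>Poly_Mapping.keys a. fact (lookup a i))"

lemma multi_fact_pos: "multi_fact a > 0" by (simp add: multi_fact_def)

lemma multi_fact_superset: assumes "finite T" "Poly_Mapping.keys a \<subseteq> T" shows "multi_fact a = (\<Prod>i\<in>T. fact (lookup a i))"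
  unfolding multi_fact_def by (rule prod.mono_neutral_left) (use assms in \<open>auto simp: in_keys_iff\<close>)

lemma multi_fact_add_var_exp: "multi_fact (a + var_exp i) = (lookup a i + 1) * multi_fact a"
proof -
  let ?T = "insert i (Poly_Mapping.keys a)"
  have f: "finite ?T" by simp
  have "Poly_Mapping.keys (a + var_exp i) \<subseteq> ?T" using keys_add[of a "var_exp i"] by auto
  then have "multi_fact (a + var_exp i) = (\<Prod>j\<in>?T. fact (lookup (a + var_exp i) j))" by (rule multi_fact_superset[OF f])
  also have "\<dots> = fact (lookup a i + 1) * (\<Prod>j\<in>?T - {i}. fact (lookup (a + var_exp i) j))"
    by (subst prod.remove[OF f, of i]) (auto simp: lookup_add)
  also have "(\<Prod>j\<in>?T - {i}. fact (lookup (a + var_exp i) j)) = (\<Prod>j\<in>?T - {i}. fact (lookup a j))"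
    by (rule prod.cong) (auto simp: lookup_add lookup_single)
  also have "multi_fact a = fact (lookup a i) * (\<Prod>j\<in>?T - {i}. fact (lookup a j))"
    using multi_fact_superset[OF f subset_insertI[of _ i]] prod.remove[OF f, of i "\<lambda>j. fact (lookup a j)"] by simp
  ultimately show ?thesis by (simp add: algebra_simps)
qed

lemma lookup_pderiv_mono_0: "lookup (pderiv_mono a Q) 0 = of_nat (multi_fact a) * lookup Q a"
proof -
  have d: "distinct (sorted_list_of_set (Poly_Mapping.keys a))" by simp
  show ?thesis
    unfolding pderiv_mono_def lookup_foldr_pderiv_var[OF d] using poly_mapping_sum_single[of a]
    by (simp add: multi_fact_def pochhammer_fact[symmetric])
qed

lemma fischer_eq_sum: "fischer P Q = (\<Sum>a\<in>Poly_Mapping.keys P. cnj (lookup P a) * of_nat (multi_fact a) * lookup Q a)"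
  unfolding fischer_def lookup_pderiv_mono_0 by (simp add: mult.assoc)

lemma fischer_eq_sum_superset: assumes "finite S" "Poly_Mapping.keys P \<subseteq> S"
  shows "fischer P Q = (\<Sum>a\<in>S. cnj (lookup P a) * of_nat (multi_fact a) * lookup Q a)"
  unfolding fischer_eq_sum by (rule sum.mono_neutral_left) (use assms in \<open>auto simp: in_keys_iff\<close>)

lemma fischer_add_left: "fischer (P1 + P2) Q = fischer P1 Q + fischer P2 Q"
proof -
  let ?S = "Poly_Mapping.keys P1 \<union> Poly_Mapping.keys P2"
  have "fischer (P1 + P2) Q = (\<Sum>a\<in>?S. cnj (lookup (P1+P2) a) * of_nat (multi_fact a) * lookup Q a)"
    by (rule fischer_eq_sum_superset) (use keys_add[of P1 P2] in auto)
  moreover have "fischer P1 Q = (\<Sum>a\<in>?S. cnj (lookup P1 a) * of_nat (multi_fact a) * lookup Q a)" by (rule fischer_eq_sum_superset) auto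
  moreover have "fischer P2 Q = (\<Sum>a\<in>?S. cnj (lookup P2 a) * of_nat (multi_fact a) * lookup Q a)" by (rule fischer_eq_sum_superset) auto
  ultimately show ?thesis by (simp add: lookup_add sum.distrib algebra_simps)
qed

lemma fischer_add_right: "fischer P (Q1 + Q2) = fischer P Q1 + fischer P Q2"
  by (simp add: fischer_eq_sum lookup_add sum.distrib algebra_simps)

lemma fischer_zero_left[simp]: "fischer 0 Q = 0" by (simp add: fischer_eq_sum)
lemma fischer_zero_right[simp]: "fischer P 0 = 0" by (simp add: fischer_eq_sum)

lemma lookup_mult_pconst: "lookup (P * pconst c) k = c * lookup P k"
  by (simp add: lookup_pconst_mult mult.commute[of P])

lemma fischer_pconst_mult_right: "fischer P (pconst c * Q) = c * fischer P Q"
  by (simp add: fischer_eq_sum lookup_pconst_mult lookup_mult_pconst sum_distrib_left algebra_simps)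

lemma fischer_uminus_left: "fischer (- P) Q = - fischer P Q"
  using fischer_add_left[of P "-P" Q] by (simp add: add_eq_0_iff)
lemma fischer_uminus_right: "fischer P (- Q) = - fischer P Q"
  using fischer_add_right[of P Q "-Q"] by (simp add: add_eq_0_iff)
lemma fischer_diff_left: "fischer (P1 - P2) Q = fischer P1 Q - fischer P2 Q"
  using fischer_add_left[of P1 "-P2" Q] by (simp add: fischer_uminus_left)
lemma fischer_sum_left: "fischer (sum f S) Q = (\<Sum>x\<in>S. fischer (f x) Q)"
  by (induction S rule: infinite_finite_induct) (simp_all add: fischer_add_left)
lemma fischer_sum_right: "fischer P (sum f S) = (\<Sum>x\<in>S. fischer P (f x))"
  by (induction S rule: infinite_finite_induct) (simp_all add: fischer_add_right)

lemma fischer_commute_cnj: "fischer Q P = cnj (fischer P Q)"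
proof -
  let ?S = "Poly_Mapping.keys P \<union> Poly_Mapping.keys Q"
  have "fischer Q P = (\<Sum>a\<in>?S. cnj (lookup Q a) * of_nat (multi_fact a) * lookup P a)" by (rule fischer_eq_sum_superset) auto
  moreover have "fischer P Q = (\<Sum>a\<in>?S. cnj (lookup P a) * of_nat (multi_fact a) * lookup Q a)" by (rule fischer_eq_sum_superset) auto
  ultimately show ?thesis by (simp add: ac_simps)
qed

lemma cnj_mult_of_nat_mult_self: "cnj z * of_nat n * z = of_real ((cmod z)\<^sup>2 * real n)"
proof -
  have "cnj z * z = of_real ((cmod z)\<^sup>2)" by (metis complex_norm_square mult.commute)
  then show ?thesis by (metis mult.commute mult.left_commute of_real_mult of_real_of_nat_eq)
qed

lemma fischer_self_eq_0: assumes "fischer P P = 0" shows "P = 0"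
proof -
  let ?S = "(\<Sum>a\<in>Poly_Mapping.keys P. (cmod (lookup P a))\<^sup>2 * real (multi_fact a))"
  have "fischer P P = (\<Sum>a\<in>Poly_Mapping.keys P. of_real ((cmod (lookup P a))\<^sup>2 * real (multi_fact a)))"
    unfolding fischer_eq_sum
    by (rule sum.cong) (simp_all add: cnj_mult_of_nat_mult_self)
  then have h: "fischer P P = of_real ?S" by (simp only: of_real_sum)
  have "complex_of_real ?S = 0" using h assms by (simp only:)
  then have "?S = 0" by (simp only: of_real_eq_0_iff)
  then have "\<forall>a\<in>Poly_Mapping.keys P. (cmod (lookup P a))\<^sup>2 * real (multi_fact a) = 0"
    by (subst (asm) sum_nonneg_eq_0_iff) auto
  then have "\<forall>a\<in>Poly_Mapping.keys P. lookup P a = 0" using multi_fact_pos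
    by (metis mult_eq_0_iff norm_eq_zero of_nat_0_less_iff power_eq_0_iff less_irrefl)
  then show ?thesis by (metis in_keys_iff keys_eq_empty equals0I)
qed

lemma pvar_mult_eq_sum: "pvar i * P = (\<Sum>a\<in>Poly_Mapping.keys P. Poly_Mapping.single (var_exp i + a) (lookup P a))"
  by (subst (1) poly_mapping_sum_single[of P]) (simp add: pvar_def sum_distrib_left mult_single)

lemma var_exp_add_eq_iff: "(var_exp i + a = b) \<longleftrightarrow> (1 \<le> lookup b i \<and> a = b - var_exp i)"
proof
  assume "var_exp i + a = b" then show "1 \<le> lookup b i \<and> a = b - var_exp i"
    by (auto simp: lookup_add)
next
  assume "1 \<le> lookup b i \<and> a = b - var_exp i" then show "var_exp i + a = b"
    using diff_var_exp_add_cancel[where a=b and i=i] by (simp add: add.commute)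
qed

lemma lookup_pvar_mult: "lookup (pvar i * P) b = (if 1 \<le> lookup b i then lookup P (b - var_exp i) else 0)"
  unfolding pvar_mult_eq_sum lookup_sum lookup_single
  by (auto simp: when_def var_exp_add_eq_iff in_keys_iff)

lemma fischer_pvar_mult_left: "fischer (pvar i * P) Q = fischer P (pderiv_var i Q)"
proof -
  let ?T = "(\<lambda>a. a + var_exp i) ` Poly_Mapping.keys P"
  have sub: "Poly_Mapping.keys (pvar i * P) \<subseteq> ?T"
  proof
    fix b assume "b \<in> Poly_Mapping.keys (pvar i * P)"
    then have "1 \<le> lookup b i" "b - var_exp i \<in> Poly_Mapping.keys P"
      by (auto simp: in_keys_iff lookup_pvar_mult split: if_splits)
    then show "b \<in> ?T" using diff_var_exp_add_cancel[where a=b and i=i] by (metis image_eqI)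
  qed
  have inj: "inj_on (\<lambda>a. a + var_exp i) (Poly_Mapping.keys P)" by (auto simp: inj_on_def)
  have lkx: "\<And>a. lookup (pvar i * P) (a + var_exp i) = lookup P a" by (simp add: lookup_pvar_mult lookup_add)
  have "fischer (pvar i * P) Q = (\<Sum>b\<in>?T. cnj (lookup (pvar i * P) b) * of_nat (multi_fact b) * lookup Q b)"
    by (rule fischer_eq_sum_superset[OF _ sub]) simp
  also have "\<dots> = (\<Sum>a\<in>Poly_Mapping.keys P. cnj (lookup (pvar i * P) (a + var_exp i)) * of_nat (multi_fact (a + var_exp i)) * lookup Q (a + var_exp i))"
    by (subst sum.reindex[OF inj]) simp
  also have "\<dots> = (\<Sum>a\<in>Poly_Mapping.keys P. cnj (lookup P a) * of_nat (multi_fact a) * lookup (pderiv_var i Q) a)"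
    using lkx by (intro sum.cong) (simp_all add: lookup_add multi_fact_add_var_exp lookup_pderiv_var algebra_simps)
  also have "\<dots> = fischer P (pderiv_var i Q)" by (simp add: fischer_eq_sum)
  finally show ?thesis .
qed

lemma fischer_pderiv_var_left: "fischer (pderiv_var i P) Q = fischer P (pvar i * Q)"
  by (metis complex_cnj_cnj fischer_pvar_mult_left fischer_commute_cnj)

section \<open>Euler operators and commutation relations\<close>

definition euler_x :: "nat \<Rightarrow> cpoly \<Rightarrow> cpoly" where "euler_x m P = (\<Sum>j<m. pvar j * pderiv_var j P)"
definition euler_u :: "nat \<Rightarrow> cpoly \<Rightarrow> cpoly" where "euler_u m P = (\<Sum>j<m. pvar (m+j) * pderiv_var (m+j) P)"

lemma sum_mult_delta[simp]: "(\<Sum>x\<in>A. f x * (if j = x then 1 else (0::cpoly))) = (if j \<in> A \<and> finite A then f j else 0)"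
proof -
  have "(\<Sum>x\<in>A. f x * (if j = x then 1 else (0::cpoly))) = (\<Sum>x\<in>A. if j = x then f x else 0)"
    by (rule sum.cong) auto
  then show ?thesis by (cases "finite A") simp_all
qed

lemma sum_delta_mult[simp]: "(\<Sum>x\<in>A. (if j = x then 1 else (0::cpoly)) * f x) = (if j \<in> A \<and> finite A then f j else 0)"
  using sum_mult_delta[of f j A] by (simp add: mult.commute)

lemma pderiv_x_normsq_x: "j < m \<Longrightarrow> pderiv_var j (normsq_x m) = 2 * pvar j"
  by (simp add: normsq_x_def pderiv_var_sum power2_eq_square pderiv_var_mult pderiv_var_pvar if_distrib cong: if_cong)
lemma pderiv_u_normsq_x: "j < m \<Longrightarrow> pderiv_var (m+j) (normsq_x m) = 0"
  by (simp add: normsq_x_def pderiv_var_sum power2_eq_square pderiv_var_mult pderiv_var_pvar)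
lemma pderiv_x_normsq_u: "j < m \<Longrightarrow> pderiv_var j (normsq_u m) = 0"
  by (simp add: normsq_u_def pderiv_var_sum power2_eq_square pderiv_var_mult pderiv_var_pvar)
lemma pderiv_u_normsq_u: "j < m \<Longrightarrow> pderiv_var (m+j) (normsq_u m) = 2 * pvar (m+j)"
  by (simp add: normsq_u_def pderiv_var_sum power2_eq_square pderiv_var_mult pderiv_var_pvar if_distrib cong: if_cong)
lemma pderiv_x_ux: "j < m \<Longrightarrow> pderiv_var j (ux m) = pvar (m+j)"
  by (simp add: ux_def pderiv_var_sum pderiv_var_mult pderiv_var_pvar del: sum_mult_delta) (simp add: if_distrib cong: if_cong)
lemma pderiv_u_ux: "j < m \<Longrightarrow> pderiv_var (m+j) (ux m) = pvar j"
  by (simp add: ux_def pderiv_var_sum pderiv_var_mult pderiv_var_pvar)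

lemma pderiv_x_pvar_u: "j < m \<Longrightarrow> pderiv_var j (pvar (m+k)) = 0" by (simp add: pderiv_var_pvar)
lemma pderiv_u_pvar_x: "k < m \<Longrightarrow> pderiv_var (m+j) (pvar k) = 0" by (simp add: pderiv_var_pvar)
lemma pderiv_u_pvar_u: "pderiv_var (m+j) (pvar (m+k)) = (if j = k then 1 else 0)" by (simp add: pderiv_var_pvar)

lemmas pderiv_simps =
  pderiv_var_add pderiv_var_diff pderiv_var_uminus pderiv_var_mult pderiv_var_sum pderiv_x_pvar_u
  pderiv_u_pvar_x pderiv_u_pvar_u pderiv_x_normsq_x pderiv_u_normsq_x pderiv_x_normsq_u
  pderiv_u_normsq_u pderiv_x_ux pderiv_u_ux

lemma lap_x_add: "lap_x m (P + Q) = lap_x m P + lap_x m Q" by (simp add: lap_x_def pderiv_var_add sum.distrib)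
lemma lap_u_add: "lap_u m (P + Q) = lap_u m P + lap_u m Q" by (simp add: lap_u_def pderiv_var_add sum.distrib)
lemma du_dx_add: "du_dx m (P + Q) = du_dx m P + du_dx m Q" by (simp add: du_dx_def pderiv_var_add sum.distrib)
lemma u_dx_add: "u_dx m (P + Q) = u_dx m P + u_dx m Q" by (simp add: u_dx_def pderiv_var_add sum.distrib algebra_simps)
lemma x_du_add: "x_du m (P + Q) = x_du m P + x_du m Q" by (simp add: x_du_def pderiv_var_add sum.distrib algebra_simps)
lemma euler_x_add: "euler_x m (P + Q) = euler_x m P + euler_x m Q" by (simp add: euler_x_def pderiv_var_add sum.distrib algebra_simps)
lemma euler_u_add: "euler_u m (P + Q) = euler_u m P + euler_u m Q" by (simp add: euler_u_def pderiv_var_add sum.distrib algebra_simps)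

lemma lap_x_pconst_mult: "lap_x m (pconst c * P) = pconst c * lap_x m P" by (simp add: lap_x_def pderiv_var_pconst_mult sum_distrib_left)
lemma lap_u_pconst_mult: "lap_u m (pconst c * P) = pconst c * lap_u m P" by (simp add: lap_u_def pderiv_var_pconst_mult sum_distrib_left)
lemma du_dx_pconst_mult: "du_dx m (pconst c * P) = pconst c * du_dx m P" by (simp add: du_dx_def pderiv_var_pconst_mult sum_distrib_left)
lemma u_dx_pconst_mult: "u_dx m (pconst c * P) = pconst c * u_dx m P" by (simp add: u_dx_def pderiv_var_mult sum_distrib_left ac_simps)
lemma x_du_pconst_mult: "x_du m (pconst c * P) = pconst c * x_du m P" by (simp add: x_du_def pderiv_var_mult sum_distrib_left ac_simps)
lemma euler_x_pconst_mult: "euler_x m (pconst c * P) = pconst c * euler_x m P" by (simp add: euler_x_def pderiv_var_mult sum_distrib_left ac_simps)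
lemma euler_u_pconst_mult: "euler_u m (pconst c * P) = pconst c * euler_u m P" by (simp add: euler_u_def pderiv_var_mult sum_distrib_left ac_simps)

lemma lap_x_0[simp]: "lap_x m 0 = 0" by (simp add: lap_x_def)
lemma lap_u_0[simp]: "lap_u m 0 = 0" by (simp add: lap_u_def)
lemma du_dx_0[simp]: "du_dx m 0 = 0" by (simp add: du_dx_def)
lemma u_dx_0[simp]: "u_dx m 0 = 0" by (simp add: u_dx_def)
lemma x_du_0[simp]: "x_du m 0 = 0" by (simp add: x_du_def)

lemma lap_x_diff: "lap_x m (P - Q) = lap_x m P - lap_x m Q" by (simp add: lap_x_def pderiv_var_diff sum_subtractf)
lemma lap_u_diff: "lap_u m (P - Q) = lap_u m P - lap_u m Q" by (simp add: lap_u_def pderiv_var_diff sum_subtractf)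
lemma du_dx_diff: "du_dx m (P - Q) = du_dx m P - du_dx m Q" by (simp add: du_dx_def pderiv_var_diff sum_subtractf)
lemma u_dx_diff: "u_dx m (P - Q) = u_dx m P - u_dx m Q" by (simp add: u_dx_def pderiv_var_diff sum_subtractf algebra_simps)
lemma x_du_diff: "x_du m (P - Q) = x_du m P - x_du m Q" by (simp add: x_du_def pderiv_var_diff sum_subtractf algebra_simps)

lemmas linear_op_simps =
  lap_x_add lap_u_add du_dx_add u_dx_add x_du_add euler_x_add euler_u_add lap_x_pconst_mult
  lap_u_pconst_mult du_dx_pconst_mult u_dx_pconst_mult x_du_pconst_mult euler_x_pconst_mult
  euler_u_pconst_mult lap_x_diff lap_u_diff du_dx_diff u_dx_diff x_du_diff

lemma lap_x_normsq_x_mult: "lap_x m (normsq_x m * F) = normsq_x m * lap_x m F + 4 * euler_x m F + 2 * of_nat m * F"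
proof -
  have "\<And>j. j < m \<Longrightarrow> pderiv_var j (pderiv_var j (normsq_x m * F)) =
     normsq_x m * pderiv_var j (pderiv_var j F) + 4 * (pvar j * pderiv_var j F) + 2 * F"
    by (simp add: pderiv_simps pderiv_var_pvar; simp add: algebra_simps)
  then have "lap_x m (normsq_x m * F) = (\<Sum>j<m. normsq_x m * pderiv_var j (pderiv_var j F) + 4 * (pvar j * pderiv_var j F) + 2 * F)"
    unfolding lap_x_def by (intro sum.cong) auto
  then show ?thesis by (simp add: sum.distrib sum_distrib_left lap_x_def euler_x_def algebra_simps)
qed

lemma lap_u_normsq_u_mult: "lap_u m (normsq_u m * F) = normsq_u m * lap_u m F + 4 * euler_u m F + 2 * of_nat m * F"
proof -
  have "\<And>j. j < m \<Longrightarrow> pderiv_var (m+j) (pderiv_var (m+j) (normsq_u m * F)) =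
     normsq_u m * pderiv_var (m+j) (pderiv_var (m+j) F) + 4 * (pvar (m+j) * pderiv_var (m+j) F) + 2 * F"
    by (simp add: pderiv_simps pderiv_var_pvar; simp add: algebra_simps)
  then have "lap_u m (normsq_u m * F) = (\<Sum>j<m. normsq_u m * pderiv_var (m+j) (pderiv_var (m+j) F) + 4 * (pvar (m+j) * pderiv_var (m+j) F) + 2 * F)"
    unfolding lap_u_def by (intro sum.cong) auto
  then show ?thesis by (simp add: sum.distrib sum_distrib_left lap_u_def euler_u_def algebra_simps)
qed

lemma lap_x_normsq_u_mult: "lap_x m (normsq_u m * F) = normsq_u m * lap_x m F"
  unfolding lap_x_def sum_distrib_left by (intro sum.cong) (simp_all add: pderiv_simps)
lemma lap_u_normsq_x_mult: "lap_u m (normsq_x m * F) = normsq_x m * lap_u m F"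
  unfolding lap_u_def sum_distrib_left by (intro sum.cong) (simp_all add: pderiv_simps)

lemma lap_x_ux_mult: "lap_x m (ux m * F) = ux m * lap_x m F + 2 * u_dx m F"
proof -
  have "\<And>j. j < m \<Longrightarrow> pderiv_var j (pderiv_var j (ux m * F)) =
     ux m * pderiv_var j (pderiv_var j F) + 2 * (pvar (m+j) * pderiv_var j F)"
    by (simp add: pderiv_simps pderiv_var_pvar; simp add: algebra_simps)
  then have "lap_x m (ux m * F) = (\<Sum>j<m. ux m * pderiv_var j (pderiv_var j F) + 2 * (pvar (m+j) * pderiv_var j F))"
    unfolding lap_x_def by (intro sum.cong) auto
  then show ?thesis by (simp add: sum.distrib sum_distrib_left lap_x_def u_dx_def)
qed

lemma lap_u_ux_mult: "lap_u m (ux m * F) = ux m * lap_u m F + 2 * x_du m F"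
proof -
  have "\<And>j. j < m \<Longrightarrow> pderiv_var (m+j) (pderiv_var (m+j) (ux m * F)) =
     ux m * pderiv_var (m+j) (pderiv_var (m+j) F) + 2 * (pvar j * pderiv_var (m+j) F)"
    by (simp add: pderiv_simps pderiv_var_pvar; simp add: algebra_simps)
  then have "lap_u m (ux m * F) = (\<Sum>j<m. ux m * pderiv_var (m+j) (pderiv_var (m+j) F) + 2 * (pvar j * pderiv_var (m+j) F))"
    unfolding lap_u_def by (intro sum.cong) auto
  then show ?thesis by (simp add: sum.distrib sum_distrib_left lap_u_def x_du_def)
qed

lemma pderiv_x_pvar_x_mult: "pderiv_var j (pvar k * G) = (if j = k then G else 0) + pvar k * pderiv_var j G"
  by (simp add: pderiv_var_mult pderiv_var_pvar)
lemma pderiv_x_pvar_u_mult: "j < m \<Longrightarrow> pderiv_var j (pvar (m+k) * G) = pvar (m+k) * pderiv_var j G"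
  by (simp add: pderiv_var_mult pderiv_var_pvar)
lemma pderiv_u_pvar_x_mult: "k < m \<Longrightarrow> pderiv_var (m+j) (pvar k * G) = pvar k * pderiv_var (m+j) G"
  by (simp add: pderiv_var_mult pderiv_var_pvar)
lemma pderiv_u_pvar_u_mult: "pderiv_var (m+j) (pvar (m+k) * G) = (if j = k then G else 0) + pvar (m+k) * pderiv_var (m+j) G"
  by (simp add: pderiv_var_mult pderiv_var_pvar)

lemma pderiv_var_rotate3: "pderiv_var k (pderiv_var j (pderiv_var i F)) = pderiv_var j (pderiv_var i (pderiv_var k F))"
  by (metis pderiv_var_commute)
lemma pderiv_var_rotate3_inv: "pderiv_var k (pderiv_var j (pderiv_var i F)) = pderiv_var i (pderiv_var k (pderiv_var j F))"
  by (metis pderiv_var_commute)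

lemma lap_x_u_dx: "lap_x m (u_dx m F) = u_dx m (lap_x m F)"
proof -
  have "lap_x m (u_dx m F) = (\<Sum>j<m. \<Sum>k<m. pvar (m+k) * pderiv_var j (pderiv_var j (pderiv_var k F)))"
    unfolding lap_x_def u_dx_def by (simp add: pderiv_var_sum pderiv_x_pvar_u_mult)
  also have "\<dots> = (\<Sum>k<m. \<Sum>j<m. pvar (m+k) * pderiv_var k (pderiv_var j (pderiv_var j F)))"
    by (subst sum.swap) (simp add: pderiv_var_rotate3)
  also have "\<dots> = u_dx m (lap_x m F)"
    unfolding lap_x_def u_dx_def by (simp add: pderiv_var_sum sum_distrib_left)
  finally show ?thesis .
qed

lemma lap_u_u_dx: "lap_u m (u_dx m F) = u_dx m (lap_u m F) + 2 * du_dx m F"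
proof -
  have "lap_u m (u_dx m F) = (\<Sum>j<m. \<Sum>k<m. pvar (m+k) * pderiv_var (m+j) (pderiv_var (m+j) (pderiv_var k F)))
          + (\<Sum>j<m. 2 * pderiv_var (m+j) (pderiv_var j F))"
    unfolding lap_u_def u_dx_def by (simp add: pderiv_var_sum pderiv_u_pvar_u_mult pderiv_var_add sum.distrib if_distrib[of "pderiv_var _"] cong: if_cong)
  also have "(\<Sum>j<m. \<Sum>k<m. pvar (m+k) * pderiv_var (m+j) (pderiv_var (m+j) (pderiv_var k F)))
     = (\<Sum>k<m. \<Sum>j<m. pvar (m+k) * pderiv_var k (pderiv_var (m+j) (pderiv_var (m+j) F)))"
    by (subst sum.swap) (simp add: pderiv_var_rotate3)
  finally show ?thesis
    unfolding lap_u_def u_dx_def du_dx_def by (simp add: pderiv_var_sum sum_distrib_left)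
qed

lemma pderiv_var_rotate4: "pderiv_var a (pderiv_var a (pderiv_var b (pderiv_var c F))) = pderiv_var b (pderiv_var c (pderiv_var a (pderiv_var a F)))"
  by (metis pderiv_var_commute)

lemma lap_x_x_du: "lap_x m (x_du m F) = x_du m (lap_x m F) + 2 * du_dx m F"
proof -
  have "lap_x m (x_du m F) = (\<Sum>j<m. \<Sum>k<m. pvar k * pderiv_var j (pderiv_var j (pderiv_var (m+k) F)))
          + (\<Sum>j<m. 2 * pderiv_var j (pderiv_var (m+j) F))"
    unfolding lap_x_def x_du_def by (simp add: pderiv_var_sum pderiv_x_pvar_x_mult pderiv_var_add sum.distrib if_distrib[of "pderiv_var _"] cong: if_cong)
  also have "(\<Sum>j<m. \<Sum>k<m. pvar k * pderiv_var j (pderiv_var j (pderiv_var (m+k) F)))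
     = (\<Sum>k<m. \<Sum>j<m. pvar k * pderiv_var (m+k) (pderiv_var j (pderiv_var j F)))"
    by (subst sum.swap) (simp add: pderiv_var_rotate3)
  finally show ?thesis
    unfolding lap_x_def x_du_def du_dx_def by (simp add: pderiv_var_sum sum_distrib_left pderiv_var_commute[of "m+_"])
qed

lemma lap_u_x_du: "lap_u m (x_du m F) = x_du m (lap_u m F)"
proof -
  have "lap_u m (x_du m F) = (\<Sum>j<m. \<Sum>k<m. pvar k * pderiv_var (m+j) (pderiv_var (m+j) (pderiv_var (m+k) F)))"
    unfolding lap_u_def x_du_def by (simp add: pderiv_var_sum pderiv_u_pvar_x_mult)
  also have "\<dots> = (\<Sum>k<m. \<Sum>j<m. pvar k * pderiv_var (m+k) (pderiv_var (m+j) (pderiv_var (m+j) F)))"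
    by (subst sum.swap) (simp add: pderiv_var_rotate3)
  also have "\<dots> = x_du m (lap_u m F)"
    unfolding lap_u_def x_du_def by (simp add: pderiv_var_sum sum_distrib_left)
  finally show ?thesis .
qed

lemma lap_x_du_dx: "lap_x m (du_dx m F) = du_dx m (lap_x m F)"
  unfolding lap_x_def du_dx_def pderiv_var_sum by (subst sum.swap) (intro sum.cong refl, rule pderiv_var_rotate4)
lemma lap_u_du_dx: "lap_u m (du_dx m F) = du_dx m (lap_u m F)"
  unfolding lap_u_def du_dx_def pderiv_var_sum by (subst sum.swap) (intro sum.cong refl, rule pderiv_var_rotate4)

lemma du_dx_normsq_x_mult: "du_dx m (normsq_x m * F) = normsq_x m * du_dx m F + 2 * x_du m F"
proof -
  have "\<And>j. j < m \<Longrightarrow> pderiv_var (m+j) (pderiv_var j (normsq_x m * F)) =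
     normsq_x m * pderiv_var (m+j) (pderiv_var j F) + 2 * (pvar j * pderiv_var (m+j) F)"
    by (simp add: pderiv_simps pderiv_var_pvar; simp add: algebra_simps)
  then have "du_dx m (normsq_x m * F) = (\<Sum>j<m. normsq_x m * pderiv_var (m+j) (pderiv_var j F) + 2 * (pvar j * pderiv_var (m+j) F))"
    unfolding du_dx_def by (intro sum.cong) auto
  then show ?thesis by (simp add: sum.distrib sum_distrib_left du_dx_def x_du_def)
qed

lemma du_dx_normsq_u_mult: "du_dx m (normsq_u m * F) = normsq_u m * du_dx m F + 2 * u_dx m F"
proof -
  have "\<And>j. j < m \<Longrightarrow> pderiv_var (m+j) (pderiv_var j (normsq_u m * F)) =
     normsq_u m * pderiv_var (m+j) (pderiv_var j F) + 2 * (pvar (m+j) * pderiv_var j F)"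
    by (simp add: pderiv_simps pderiv_var_pvar; simp add: algebra_simps)
  then have "du_dx m (normsq_u m * F) = (\<Sum>j<m. normsq_u m * pderiv_var (m+j) (pderiv_var j F) + 2 * (pvar (m+j) * pderiv_var j F))"
    unfolding du_dx_def by (intro sum.cong) auto
  then show ?thesis by (simp add: sum.distrib sum_distrib_left du_dx_def u_dx_def)
qed

lemma du_dx_ux_mult: "du_dx m (ux m * F) = ux m * du_dx m F + euler_x m F + euler_u m F + of_nat m * F"
proof -
  have "\<And>j. j < m \<Longrightarrow> pderiv_var (m+j) (pderiv_var j (ux m * F)) =
     ux m * pderiv_var (m+j) (pderiv_var j F) + pvar j * pderiv_var j F + pvar (m+j) * pderiv_var (m+j) F + F"
    by (simp add: pderiv_simps pderiv_var_pvar; simp add: algebra_simps)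
  then have "du_dx m (ux m * F) = (\<Sum>j<m. ux m * pderiv_var (m+j) (pderiv_var j F) + pvar j * pderiv_var j F + pvar (m+j) * pderiv_var (m+j) F + F)"
    unfolding du_dx_def by (intro sum.cong) auto
  then show ?thesis by (simp add: sum.distrib sum_distrib_left du_dx_def euler_x_def euler_u_def)
qed

lemma du_dx_u_dx: "du_dx m (u_dx m F) = u_dx m (du_dx m F) + lap_x m F"
proof -
  have "du_dx m (u_dx m F) = (\<Sum>j<m. \<Sum>k<m. pvar (m+k) * pderiv_var (m+j) (pderiv_var j (pderiv_var k F)))
          + (\<Sum>j<m. pderiv_var j (pderiv_var j F))"
    unfolding du_dx_def u_dx_def
    by (simp add: pderiv_var_sum pderiv_x_pvar_u_mult pderiv_u_pvar_u_mult pderiv_var_add sum.distrib if_distrib[of "pderiv_var _"] cong: if_cong)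
  also have "(\<Sum>j<m. \<Sum>k<m. pvar (m+k) * pderiv_var (m+j) (pderiv_var j (pderiv_var k F)))
     = (\<Sum>k<m. \<Sum>j<m. pvar (m+k) * pderiv_var k (pderiv_var (m+j) (pderiv_var j F)))"
    by (subst sum.swap) (simp add: pderiv_var_rotate3_inv)
  finally show ?thesis
    unfolding lap_x_def u_dx_def du_dx_def by (simp add: pderiv_var_sum sum_distrib_left)
qed

lemma u_dx_normsq_x_mult: "u_dx m (normsq_x m * F) = normsq_x m * u_dx m F + 2 * ux m * F"
proof -
  have "\<And>j. j < m \<Longrightarrow> pvar (m+j) * pderiv_var j (normsq_x m * F) =
     normsq_x m * (pvar (m+j) * pderiv_var j F) + 2 * (pvar (m+j) * pvar j) * F"
    by (simp add: pderiv_simps pderiv_var_pvar; simp add: algebra_simps)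
  then have "u_dx m (normsq_x m * F) = (\<Sum>j<m. normsq_x m * (pvar (m+j) * pderiv_var j F) + 2 * (pvar (m+j) * pvar j) * F)"
    unfolding u_dx_def by (intro sum.cong) auto
  then show ?thesis by (simp add: sum.distrib sum_distrib_left sum_distrib_right u_dx_def ux_def)
qed

lemma u_dx_normsq_u_mult: "u_dx m (normsq_u m * F) = normsq_u m * u_dx m F"
  unfolding u_dx_def sum_distrib_left by (intro sum.cong) (simp_all add: pderiv_simps algebra_simps)

lemma u_dx_ux_mult: "u_dx m (ux m * F) = ux m * u_dx m F + normsq_u m * F"
proof -
  have "\<And>j. j < m \<Longrightarrow> pvar (m+j) * pderiv_var j (ux m * F) =
     ux m * (pvar (m+j) * pderiv_var j F) + pvar (m+j)^2 * F"
    by (simp add: pderiv_simps pderiv_var_pvar; simp add: algebra_simps power2_eq_square)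
  then have "u_dx m (ux m * F) = (\<Sum>j<m. ux m * (pvar (m+j) * pderiv_var j F) + pvar (m+j)^2 * F)"
    unfolding u_dx_def by (intro sum.cong) auto
  then show ?thesis by (simp add: sum.distrib sum_distrib_left sum_distrib_right u_dx_def normsq_u_def)
qed

lemma x_du_normsq_u_mult: "x_du m (normsq_u m * F) = normsq_u m * x_du m F + 2 * ux m * F"
proof -
  have "\<And>j. j < m \<Longrightarrow> pvar j * pderiv_var (m+j) (normsq_u m * F) =
     normsq_u m * (pvar j * pderiv_var (m+j) F) + 2 * (pvar (m+j) * pvar j) * F"
    by (simp add: pderiv_simps pderiv_var_pvar; simp add: algebra_simps)
  then have "x_du m (normsq_u m * F) = (\<Sum>j<m. normsq_u m * (pvar j * pderiv_var (m+j) F) + 2 * (pvar (m+j) * pvar j) * F)"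
    unfolding x_du_def by (intro sum.cong) auto
  then show ?thesis by (simp add: sum.distrib sum_distrib_left sum_distrib_right x_du_def ux_def)
qed

lemma x_du_normsq_x_mult: "x_du m (normsq_x m * F) = normsq_x m * x_du m F"
  unfolding x_du_def sum_distrib_left by (intro sum.cong) (simp_all add: pderiv_simps mult.left_commute)

lemma x_du_ux_mult: "x_du m (ux m * F) = ux m * x_du m F + normsq_x m * F"
proof -
  have "\<And>j. j < m \<Longrightarrow> pvar j * pderiv_var (m+j) (ux m * F) =
     ux m * (pvar j * pderiv_var (m+j) F) + pvar j^2 * F"
    by (simp add: pderiv_simps pderiv_var_pvar; simp add: algebra_simps power2_eq_square)
  then have "x_du m (ux m * F) = (\<Sum>j<m. ux m * (pvar j * pderiv_var (m+j) F) + pvar j^2 * F)"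
    unfolding x_du_def by (intro sum.cong) auto
  then show ?thesis by (simp add: sum.distrib sum_distrib_left sum_distrib_right x_du_def normsq_x_def)
qed

lemma x_du_u_dx: "x_du m (u_dx m F) = u_dx m (x_du m F) + euler_x m F - euler_u m F"
proof -
  have "x_du m (u_dx m F) = (\<Sum>j<m. \<Sum>k<m. pvar j * (pvar (m+k) * pderiv_var (m+j) (pderiv_var k F)))
          + euler_x m F"
    unfolding x_du_def u_dx_def euler_x_def
    by (simp add: pderiv_var_sum pderiv_u_pvar_u_mult distrib_left sum.distrib sum_distrib_left if_distrib[of "(*) _"] cong: if_cong)
  moreover have "u_dx m (x_du m F) = (\<Sum>k<m. \<Sum>j<m. pvar (m+k) * (pvar j * pderiv_var k (pderiv_var (m+j) F)))
          + euler_u m F"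
    unfolding x_du_def u_dx_def euler_u_def
    by (simp add: pderiv_var_sum pderiv_x_pvar_x_mult distrib_left sum.distrib sum_distrib_left if_distrib[of "(*) _"] cong: if_cong)
  moreover have "(\<Sum>j<m. \<Sum>k<m. pvar j * (pvar (m+k) * pderiv_var (m+j) (pderiv_var k F)))
     = (\<Sum>k<m. \<Sum>j<m. pvar (m+k) * (pvar j * pderiv_var k (pderiv_var (m+j) F)))"
    by (subst sum.swap) (intro sum.cong refl, subst pderiv_var_commute, rule mult.left_commute)
  ultimately show ?thesis by simp
qed

section \<open>Bihomogeneous polynomials\<close>

lemma Pspace_iff: "P \<in> Pspace m p q \<longleftrightarrow> (\<forall>a\<in>Poly_Mapping.keys P. Poly_Mapping.keys a \<subseteq> {..<2*m}
      \<and> (\<Sum>j<m. lookup a j) = p \<and> (\<Sum>j<m. lookup a (m + j)) = q)"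
  by (simp add: Pspace_def)

lemma Pspace_zero[simp]: "0 \<in> Pspace m p q" by (simp add: Pspace_iff)
lemma Pspace_add: "P \<in> Pspace m p q \<Longrightarrow> Q \<in> Pspace m p q \<Longrightarrow> P + Q \<in> Pspace m p q"
  unfolding Pspace_iff using keys_add[of P Q] by blast
lemma Pspace_pconst_mult: "P \<in> Pspace m p q \<Longrightarrow> pconst c * P \<in> Pspace m p q"
  unfolding Pspace_iff by (auto simp: in_keys_iff lookup_pconst_mult)
lemma Pspace_uminus: "P \<in> Pspace m p q \<Longrightarrow> - P \<in> Pspace m p q"
  unfolding Pspace_iff by (auto simp: in_keys_iff)
lemma Pspace_diff: "P \<in> Pspace m p q \<Longrightarrow> Q \<in> Pspace m p q \<Longrightarrow> P - Q \<in> Pspace m p q"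
  using Pspace_add[OF _ Pspace_uminus] by (metis diff_conv_add_uminus)
lemma Pspace_sum: "(\<And>i. i \<in> S \<Longrightarrow> f i \<in> Pspace m p q) \<Longrightarrow> sum f S \<in> Pspace m p q"
  by (induction S rule: infinite_finite_induct) (auto intro: Pspace_add)
lemma keys_pvar_mult: "b \<in> Poly_Mapping.keys (pvar i * P) \<Longrightarrow> \<exists>a\<in>Poly_Mapping.keys P. b = var_exp i + a"
proof -
  assume b: "b \<in> Poly_Mapping.keys (pvar i * P)"
  then have "1 \<le> lookup b i" "b - var_exp i \<in> Poly_Mapping.keys P"
    by (auto simp: in_keys_iff lookup_pvar_mult split: if_splits)
  moreover have "var_exp i + (b - var_exp i) = b" using var_exp_add_eq_iff[of i "b - var_exp i" b] \<open>1 \<le> lookup b i\<close> by simp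
  ultimately show ?thesis by (metis bexI)
qed

lemma sum_lookup_single_x: "(\<Sum>k<m. lookup (Poly_Mapping.single i (n::nat)) k) = (if i < (m::nat) then n else 0)"
  by (simp add: lookup_single when_def sum.delta sum.delta')
lemma sum_lookup_single_u: "(\<Sum>k<m. lookup (Poly_Mapping.single (i::nat) (n::nat)) (m + k)) = (if m \<le> i \<and> i < 2*m then n else 0)"
proof -
  have "(\<Sum>k<m. lookup (Poly_Mapping.single i n) (m + k)) = (\<Sum>k<m. if k = i - m \<and> m \<le> i then n else 0)"
    by (rule sum.cong) (auto simp: lookup_single when_def)
  then show ?thesis by (auto simp: sum.delta)
qed

lemma Pspace_pvar_x_mult: assumes "j < m" "P \<in> Pspace m p q" shows "pvar j * P \<in> Pspace m (Suc p) q"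
  unfolding Pspace_iff
proof
  fix b assume "b \<in> Poly_Mapping.keys (pvar j * P)"
  then obtain a where a: "a \<in> Poly_Mapping.keys P" "b = var_exp j + a" using keys_pvar_mult by blast
  then have k: "Poly_Mapping.keys a \<subseteq> {..<2*m}" "(\<Sum>k<m. lookup a k) = p" "(\<Sum>k<m. lookup a (m+k)) = q"
    using assms(2) unfolding Pspace_iff by auto
  show "Poly_Mapping.keys b \<subseteq> {..<2*m} \<and> (\<Sum>k<m. lookup b k) = Suc p \<and> (\<Sum>k<m. lookup b (m + k)) = q"
    using k assms(1) keys_add[of "var_exp j" a] unfolding a(2)
    by (auto simp: lookup_add sum.distrib sum_lookup_single_x sum_lookup_single_u)
qed

lemma Pspace_pvar_u_mult: assumes "j < m" "P \<in> Pspace m p q" shows "pvar (m+j) * P \<in> Pspace m p (Suc q)"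
  unfolding Pspace_iff
proof
  fix b assume "b \<in> Poly_Mapping.keys (pvar (m+j) * P)"
  then obtain a where a: "a \<in> Poly_Mapping.keys P" "b = var_exp (m+j) + a" using keys_pvar_mult by blast
  then have k: "Poly_Mapping.keys a \<subseteq> {..<2*m}" "(\<Sum>k<m. lookup a k) = p" "(\<Sum>k<m. lookup a (m+k)) = q"
    using assms(2) unfolding Pspace_iff by auto
  show "Poly_Mapping.keys b \<subseteq> {..<2*m} \<and> (\<Sum>k<m. lookup b k) = p \<and> (\<Sum>k<m. lookup b (m + k)) = Suc q"
    using k assms(1) keys_add[of "var_exp (m+j)" a] unfolding a(2)
    by (auto simp: lookup_add sum.distrib sum_lookup_single_x sum_lookup_single_u)
qed

lemma keys_pderiv_var: "c \<in> Poly_Mapping.keys (pderiv_var i P) \<Longrightarrow> c + var_exp i \<in> Poly_Mapping.keys P"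
  by (auto simp: in_keys_iff lookup_pderiv_var)

lemma Pspace_pderiv_x: assumes "j < m" "P \<in> Pspace m p q" shows "pderiv_var j P \<in> Pspace m (p - 1) q"
  unfolding Pspace_iff
proof
  fix c assume "c \<in> Poly_Mapping.keys (pderiv_var j P)"
  then have a: "c + var_exp j \<in> Poly_Mapping.keys P" by (rule keys_pderiv_var)
  then have k: "Poly_Mapping.keys (c + var_exp j) \<subseteq> {..<2*m}" "(\<Sum>k<m. lookup (c + var_exp j) k) = p" "(\<Sum>k<m. lookup (c + var_exp j) (m+k)) = q"
    using assms(2) unfolding Pspace_iff by auto
  have kc: "Poly_Mapping.keys c \<subseteq> Poly_Mapping.keys (c + var_exp j)" by (auto simp: in_keys_iff lookup_add)
  show "Poly_Mapping.keys c \<subseteq> {..<2*m} \<and> (\<Sum>k<m. lookup c k) = p - 1 \<and> (\<Sum>k<m. lookup c (m + k)) = q"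
    using k kc assms(1) by (auto simp: lookup_add sum.distrib sum_lookup_single_x sum_lookup_single_u)
qed

lemma Pspace_pderiv_u: assumes "j < m" "P \<in> Pspace m p q" shows "pderiv_var (m+j) P \<in> Pspace m p (q - 1)"
  unfolding Pspace_iff
proof
  fix c assume "c \<in> Poly_Mapping.keys (pderiv_var (m+j) P)"
  then have a: "c + var_exp (m+j) \<in> Poly_Mapping.keys P" by (rule keys_pderiv_var)
  then have k: "Poly_Mapping.keys (c + var_exp (m+j)) \<subseteq> {..<2*m}" "(\<Sum>k<m. lookup (c + var_exp (m+j)) k) = p" "(\<Sum>k<m. lookup (c + var_exp (m+j)) (m+k)) = q"
    using assms(2) unfolding Pspace_iff by auto
  have kc: "Poly_Mapping.keys c \<subseteq> Poly_Mapping.keys (c + var_exp (m+j))" by (auto simp: in_keys_iff lookup_add)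
  show "Poly_Mapping.keys c \<subseteq> {..<2*m} \<and> (\<Sum>k<m. lookup c k) = p \<and> (\<Sum>k<m. lookup c (m + k)) = q - 1"
    using k kc assms(1) by (auto simp: lookup_add sum.distrib sum_lookup_single_x sum_lookup_single_u)
qed

lemma pderiv_x_Pspace_0: assumes "j < m" "P \<in> Pspace m 0 q" shows "pderiv_var j P = 0"
proof (rule poly_mapping_eqI)
  fix c
  have "c + var_exp j \<notin> Poly_Mapping.keys P"
  proof
    assume "c + var_exp j \<in> Poly_Mapping.keys P"
    then have "(\<Sum>k<m. lookup (c + var_exp j) k) = 0" using assms(2) unfolding Pspace_iff by auto
    then show False using assms(1) by (simp add: lookup_add sum.distrib sum_lookup_single_x)
  qed
  then show "lookup (pderiv_var j P) c = lookup 0 c" by (simp add: lookup_pderiv_var in_keys_iff)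
qed

lemma pderiv_u_Pspace_0: assumes "j < m" "P \<in> Pspace m p 0" shows "pderiv_var (m+j) P = 0"
proof (rule poly_mapping_eqI)
  fix c
  have "c + var_exp (m+j) \<notin> Poly_Mapping.keys P"
  proof
    assume "c + var_exp (m+j) \<in> Poly_Mapping.keys P"
    then have "(\<Sum>k<m. lookup (c + var_exp (m+j)) (m+k)) = 0" using assms(2) unfolding Pspace_iff by auto
    then show False using assms(1) by (simp add: lookup_add sum.distrib sum_lookup_single_u)
  qed
  then show "lookup (pderiv_var (m+j) P) c = lookup 0 c" by (simp add: lookup_pderiv_var in_keys_iff)
qed

lemma euler_x_Pspace: assumes "P \<in> Pspace m p q" shows "euler_x m P = of_nat p * P"
proof (rule poly_mapping_eqI)
  fix c
  have "lookup (euler_x m P) c = (\<Sum>j<m. of_nat (lookup c j) * lookup P c)"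
    unfolding euler_x_def lookup_sum
    by (rule sum.cong) (auto simp: lookup_pvar_mult lookup_pderiv_var lookup_diff_nat diff_var_exp_add_cancel)
  also have "\<dots> = of_nat (\<Sum>j<m. lookup c j) * lookup P c" by (simp add: sum_distrib_right)
  also have "\<dots> = of_nat p * lookup P c"
    using assms unfolding Pspace_iff by (cases "c \<in> Poly_Mapping.keys P") (auto simp: in_keys_iff)
  finally show "lookup (euler_x m P) c = lookup (of_nat p * P) c" by (simp flip: pconst_of_nat add: lookup_pconst_mult)
qed

lemma euler_u_Pspace: assumes "P \<in> Pspace m p q" shows "euler_u m P = of_nat q * P"
proof (rule poly_mapping_eqI)
  fix c
  have "lookup (euler_u m P) c = (\<Sum>j<m. of_nat (lookup c (m+j)) * lookup P c)"
    unfolding euler_u_def lookup_sum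
    by (rule sum.cong) (auto simp: lookup_pvar_mult lookup_pderiv_var lookup_diff_nat diff_var_exp_add_cancel)
  also have "\<dots> = of_nat (\<Sum>j<m. lookup c (m+j)) * lookup P c" by (simp add: sum_distrib_right)
  also have "\<dots> = of_nat q * lookup P c"
    using assms unfolding Pspace_iff by (cases "c \<in> Poly_Mapping.keys P") (auto simp: in_keys_iff)
  finally show "lookup (euler_u m P) c = lookup (of_nat q * P) c" by (simp flip: pconst_of_nat add: lookup_pconst_mult)
qed

lemma normsq_x_mult_eq_sum: "normsq_x m * F = (\<Sum>j<m. pvar j * (pvar j * F))"
  by (simp add: normsq_x_def sum_distrib_right power2_eq_square mult.assoc)
lemma normsq_u_mult_eq_sum: "normsq_u m * F = (\<Sum>j<m. pvar (m+j) * (pvar (m+j) * F))"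
  by (simp add: normsq_u_def sum_distrib_right power2_eq_square mult.assoc)
lemma ux_mult_eq_sum: "ux m * F = (\<Sum>j<m. pvar (m+j) * (pvar j * F))"
  by (simp add: ux_def sum_distrib_right mult.assoc)

lemma Pspace_normsq_x_mult: "F \<in> Pspace m p q \<Longrightarrow> normsq_x m * F \<in> Pspace m (p+2) q"
  unfolding normsq_x_mult_eq_sum by (intro Pspace_sum) (auto intro!: Pspace_pvar_x_mult)
lemma Pspace_normsq_u_mult: "F \<in> Pspace m p q \<Longrightarrow> normsq_u m * F \<in> Pspace m p (q+2)"
  unfolding normsq_u_mult_eq_sum by (intro Pspace_sum) (auto intro!: Pspace_pvar_u_mult)
lemma Pspace_ux_mult: "F \<in> Pspace m p q \<Longrightarrow> ux m * F \<in> Pspace m (p+1) (q+1)"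
  unfolding ux_mult_eq_sum by (intro Pspace_sum) (metis Pspace_pvar_u_mult Pspace_pvar_x_mult Suc_eq_plus1 lessThan_iff)
lemma Pspace_u_dx: "F \<in> Pspace m p q \<Longrightarrow> u_dx m F \<in> Pspace m (p-1) (q+1)"
  unfolding u_dx_def by (intro Pspace_sum) (metis Pspace_pvar_u_mult Pspace_pderiv_x Suc_eq_plus1 lessThan_iff)
lemma Pspace_x_du: "F \<in> Pspace m p q \<Longrightarrow> x_du m F \<in> Pspace m (p+1) (q-1)"
  unfolding x_du_def by (intro Pspace_sum) (metis Pspace_pvar_x_mult Pspace_pderiv_u Suc_eq_plus1 lessThan_iff)
lemma Pspace_du_dx: "F \<in> Pspace m p q \<Longrightarrow> du_dx m F \<in> Pspace m (p-1) (q-1)"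
  unfolding du_dx_def by (intro Pspace_sum) (metis Pspace_pderiv_u Pspace_pderiv_x lessThan_iff)
lemma u_dx_Pspace_0: "F \<in> Pspace m 0 q \<Longrightarrow> u_dx m F = 0"
  unfolding u_dx_def by (simp add: pderiv_x_Pspace_0)
lemma du_dx_Pspace_0_left: "F \<in> Pspace m 0 q \<Longrightarrow> du_dx m F = 0"
  unfolding du_dx_def by (simp add: pderiv_x_Pspace_0)
lemma x_du_Pspace_0: "F \<in> Pspace m p 0 \<Longrightarrow> x_du m F = 0"
  unfolding x_du_def by (simp add: pderiv_u_Pspace_0)
lemma du_dx_Pspace_0_right: "F \<in> Pspace m p 0 \<Longrightarrow> du_dx m F = 0"
proof -
  assume F: "F \<in> Pspace m p 0"
  have "\<And>j. j < m \<Longrightarrow> pderiv_var (m+j) (pderiv_var j F) = 0"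
    using Pspace_pderiv_x[OF _ F] pderiv_u_Pspace_0 by (metis diff_0_eq_0)
  then show ?thesis unfolding du_dx_def by simp
qed

lemma fischer_normsq_x_mult_left: "fischer (normsq_x m * F) G = fischer F (lap_x m G)"
  unfolding normsq_x_mult_eq_sum lap_x_def by (simp add: fischer_sum_left fischer_sum_right fischer_pvar_mult_left)
lemma fischer_normsq_u_mult_left: "fischer (normsq_u m * F) G = fischer F (lap_u m G)"
  unfolding normsq_u_mult_eq_sum lap_u_def by (simp add: fischer_sum_left fischer_sum_right fischer_pvar_mult_left)
lemma fischer_ux_mult_left: "fischer (ux m * F) G = fischer F (du_dx m G)"
  unfolding ux_mult_eq_sum du_dx_def by (simp add: fischer_sum_left fischer_sum_right fischer_pvar_mult_left pderiv_var_commute[of "m+_"])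
lemma fischer_u_dx_left: "fischer (u_dx m F) G = fischer F (x_du m G)"
  unfolding u_dx_def x_du_def by (simp add: fischer_sum_left fischer_sum_right fischer_pvar_mult_left fischer_pderiv_var_left)

section \<open>The ideal generated by \<open>|x|\<^sup>2\<close> and \<open>|u|\<^sup>2\<close>\<close>

definition harmonic :: "nat \<Rightarrow> cpoly \<Rightarrow> bool" where
  "harmonic m P \<longleftrightarrow> lap_x m P = 0 \<and> lap_u m P = 0"

lemma harmonic_add: "harmonic m P \<Longrightarrow> harmonic m Q \<Longrightarrow> harmonic m (P + Q)"
  by (simp add: harmonic_def lap_x_add lap_u_add)

lemma harmonic_diff: "harmonic m P \<Longrightarrow> harmonic m Q \<Longrightarrow> harmonic m (P - Q)"
  by (simp add: harmonic_def lap_x_diff lap_u_diff)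

lemma harmonic_pconst_mult: "harmonic m P \<Longrightarrow> harmonic m (pconst c * P)"
  by (simp add: harmonic_def lap_x_pconst_mult lap_u_pconst_mult)

lemma HarmD:
  assumes "h \<in> Harm m p q"
  shows "h \<in> Pspace m p q" "lap_x m h = 0" "lap_u m h = 0"
  using assms by (auto simp: Harm_def)

lemma Harm_harmonic: "h \<in> Harm m p q \<Longrightarrow> harmonic m h"
  by (simp add: Harm_def harmonic_def)

lemma Harm_zero[simp]: "0 \<in> Harm m p q"
  by (simp add: Harm_def)

lemma du_dx_Harm_0_left: "h \<in> Harm m 0 q \<Longrightarrow> du_dx m h = 0"
  by (auto simp: Harm_def intro: du_dx_Pspace_0_left)

lemma du_dx_Harm_0_right: "h \<in> Harm m p 0 \<Longrightarrow> du_dx m h = 0"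
  by (auto simp: Harm_def intro: du_dx_Pspace_0_right)

definition in_norm_ideal :: "nat \<Rightarrow> cpoly \<Rightarrow> bool" where
  "in_norm_ideal m F \<longleftrightarrow> (\<exists>A B. F = normsq_x m * A + normsq_u m * B)"

lemma in_norm_ideal_0[simp]: "in_norm_ideal m 0"
  unfolding in_norm_ideal_def by (rule exI[of _ 0], rule exI[of _ 0]) simp

lemma in_norm_ideal_normsq_x_mult[simp]: "in_norm_ideal m (normsq_x m * F)"
  unfolding in_norm_ideal_def by (rule exI[of _ F], rule exI[of _ 0]) simp

lemma in_norm_ideal_normsq_u_mult[simp]: "in_norm_ideal m (normsq_u m * F)"
  unfolding in_norm_ideal_def by (rule exI[of _ 0], rule exI[of _ F]) simp

lemma in_norm_ideal_add:
  assumes "in_norm_ideal m F" "in_norm_ideal m G"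
  shows "in_norm_ideal m (F + G)"
proof -
  obtain A B A' B' where "F = normsq_x m * A + normsq_u m * B" "G = normsq_x m * A' + normsq_u m * B'"
    using assms unfolding in_norm_ideal_def by blast
  then have "F + G = normsq_x m * (A + A') + normsq_u m * (B + B')" by (simp add: algebra_simps)
  then show ?thesis unfolding in_norm_ideal_def by blast
qed

lemma in_norm_ideal_mult:
  assumes "in_norm_ideal m F"
  shows "in_norm_ideal m (R * F)"
proof -
  obtain A B where "F = normsq_x m * A + normsq_u m * B"
    using assms unfolding in_norm_ideal_def by blast
  then have "R * F = normsq_x m * (R * A) + normsq_u m * (R * B)" by (simp add: algebra_simps)
  then show ?thesis unfolding in_norm_ideal_def by blast
qed

lemma in_norm_ideal_uminus: "in_norm_ideal m F \<Longrightarrow> in_norm_ideal m (- F)"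
  using in_norm_ideal_mult[of m F "-1"] by simp

lemma in_norm_ideal_diff: "in_norm_ideal m F \<Longrightarrow> in_norm_ideal m G \<Longrightarrow> in_norm_ideal m (F - G)"
  using in_norm_ideal_add[OF _ in_norm_ideal_uminus] by (metis diff_conv_add_uminus)

lemma in_norm_ideal_sum: "(\<And>i. i \<in> S \<Longrightarrow> in_norm_ideal m (f i)) \<Longrightarrow> in_norm_ideal m (sum f S)"
  by (induction S rule: infinite_finite_induct) (auto intro: in_norm_ideal_add)

lemma fischer_norm_ideal_harmonic:
  assumes "in_norm_ideal m F" "harmonic m h"
  shows "fischer F h = 0"
proof -
  obtain A B where "F = normsq_x m * A + normsq_u m * B"
    using assms(1) unfolding in_norm_ideal_def by blast
  then show ?thesis
    using assms(2)
    by (simp add: harmonic_def fischer_add_left fischer_normsq_x_mult_left fischer_normsq_u_mult_left)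
qed

lemma in_norm_ideal_harmonic_eq:
  assumes "in_norm_ideal m (h1 - h2)" "harmonic m h1" "harmonic m h2"
  shows "h1 = h2"
proof -
  have "fischer (h1 - h2) (h1 - h2) = 0"
    by (rule fischer_norm_ideal_harmonic[OF assms(1) harmonic_diff[OF assms(2,3)]])
  then show ?thesis by (metis fischer_self_eq_0 right_minus_eq)
qed

lemma decomp_sum_minus_head_in_norm_ideal:
  fixes H :: "nat \<Rightarrow> nat \<Rightarrow> cpoly"
  shows "in_norm_ideal m ((\<Sum>a\<le>A. \<Sum>b\<le>B. normsq_x m ^ a * normsq_u m ^ b * H a b) - H 0 0)"
proof -
  let ?f = "\<lambda>a b. normsq_x m ^ a * normsq_u m ^ b * H a b"
  have split: "?f a b = (if a = 0 \<and> b = 0 then H 0 0 else 0) + (if a = 0 \<and> b = 0 then 0 else ?f a b)" for a b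
    by auto
  have "(\<Sum>a\<le>A. \<Sum>b\<le>B. ?f a b) = (\<Sum>a\<le>A. \<Sum>b\<le>B. (if a = 0 \<and> b = 0 then H 0 0 else 0))
          + (\<Sum>a\<le>A. \<Sum>b\<le>B. (if a = 0 \<and> b = 0 then 0 else ?f a b))"
    by (subst split) (simp add: sum.distrib)
  also have "(\<Sum>a\<le>A. \<Sum>b\<le>B. (if a = 0 \<and> b = 0 then H 0 0 else 0)) = H 0 0"
  proof -
    have i: "\<And>a. (\<Sum>b\<le>B. (if a = 0 \<and> b = 0 then H 0 0 else 0)) = (if a = 0 then H 0 0 else 0)"
      by (case_tac "a = 0") (simp_all add: sum.delta)
    show ?thesis by (simp only: i) (simp add: sum.delta)
  qed
  finally have e: "(\<Sum>a\<le>A. \<Sum>b\<le>B. ?f a b) - H 0 0 = (\<Sum>a\<le>A. \<Sum>b\<le>B. (if a = 0 \<and> b = 0 then 0 else ?f a b))"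
    by simp
  have "in_norm_ideal m (if a = 0 \<and> b = 0 then 0 else ?f a b)" for a b
  proof (cases "a = 0")
    case True
    show ?thesis
    proof (cases b)
      case (Suc b') then show ?thesis using True
        by (simp add: mult.assoc mult.left_commute in_norm_ideal_mult)
    qed (use True in simp)
  next
    case False
    then obtain a' where "a = Suc a'" by (cases a) auto
    then show ?thesis by (simp add: mult.assoc in_norm_ideal_mult)
  qed
  then show ?thesis unfolding e by (intro in_norm_ideal_sum) auto
qed

lemma pi_s_eqI:
  fixes H :: "nat \<Rightarrow> nat \<Rightarrow> cpoly"
  assumes P: "P \<in> Pspace m p q" and H: "\<And>a b. H a b \<in> Harm m (p - 2*a) (q - 2*b)"
    and Pe: "P = (\<Sum>a\<le>p div 2. \<Sum>b\<le>q div 2. normsq_x m ^ a * normsq_u m ^ b * H a b)"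
  shows "pi_s m P = H 0 0"
  unfolding pi_s_def
proof (rule the_equality)
  show "\<exists>p q H'. P \<in> Pspace m p q \<and> (\<forall>a b. H' a b \<in> Harm m (p - 2*a) (q - 2*b))
      \<and> P = (\<Sum>a\<le>p div 2. \<Sum>b\<le>q div 2. normsq_x m ^ a * normsq_u m ^ b * H' a b) \<and> H 0 0 = H' 0 0"
    using assms by blast
next
  fix h assume "\<exists>p q H'. P \<in> Pspace m p q \<and> (\<forall>a b. H' a b \<in> Harm m (p - 2*a) (q - 2*b))
      \<and> P = (\<Sum>a\<le>p div 2. \<Sum>b\<le>q div 2. normsq_x m ^ a * normsq_u m ^ b * H' a b) \<and> h = H' 0 0"
  then obtain p' q' H' where H': "\<And>a b. H' a b \<in> Harm m (p' - 2*a) (q' - 2*b)"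
    and Pe': "P = (\<Sum>a\<le>p' div 2. \<Sum>b\<le>q' div 2. normsq_x m ^ a * normsq_u m ^ b * H' a b)" and h: "h = H' 0 0"
    by blast
  have i1: "in_norm_ideal m (P - H 0 0)" by (subst Pe) (rule decomp_sum_minus_head_in_norm_ideal)
  have i2: "in_norm_ideal m (P - H' 0 0)" by (subst Pe') (rule decomp_sum_minus_head_in_norm_ideal)
  have c1: "in_norm_ideal m (h - H 0 0)" using in_norm_ideal_diff[OF i1 i2] h by (simp add: algebra_simps)
  show "h = H 0 0" using in_norm_ideal_harmonic_eq[OF c1] Harm_harmonic H' H h by metis
qed

lemma sum_atMost_eq_first_two: assumes "\<And>a. a \<ge> 2 \<Longrightarrow> g a = 0" "(A::nat) = 0 \<Longrightarrow> g 1 = 0"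
  shows "(\<Sum>a\<le>A. g a) = g 0 + (g 1 :: 'a::comm_monoid_add)"
proof (cases A)
  case 0 then show ?thesis using assms by simp
next
  case (Suc A')
  have "(\<Sum>a\<le>Suc A'. g a) = g 0 + g 1" for A'
  proof (induction A')
    case 0 then show ?case by simp
  next
    case (Suc n) then show ?case using assms(1)[of "Suc (Suc n)"] by simp
  qed
  then show ?thesis using Suc by simp
qed

text \<open>The vanishing hypotheses are needed because the decomposition in the definition of
  \<open>\<pi>\<^sub>s\<close> only runs up to \<open>p div 2\<close> and \<open>q div 2\<close>, while \<open>p - 2\<close> truncates at \<open>0\<close>.\<close>

lemma pi_s_eq_of_decomp:
  assumes P: "P \<in> Pspace m p q"
    and h00: "h00 \<in> Harm m p q" and h10: "h10 \<in> Harm m (p-2) q" and h01: "h01 \<in> Harm m p (q-2)"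
    and h11: "h11 \<in> Harm m (p-2) (q-2)"
    and zp: "p < 2 \<Longrightarrow> h10 = 0 \<and> h11 = 0" and zq: "q < 2 \<Longrightarrow> h01 = 0 \<and> h11 = 0"
    and Pe: "P = h00 + normsq_x m * h10 + normsq_u m * h01 + normsq_x m * (normsq_u m * h11)"
  shows "pi_s m P = h00"
proof -
  define H where "H a b = (if a = 0 \<and> b = 0 then h00 else if a = 1 \<and> b = 0 then h10
     else if a = 0 \<and> b = 1 then h01 else if a = 1 \<and> b = 1 then h11 else 0)" for a b :: nat
  have H: "H a b \<in> Harm m (p - 2*a) (q - 2*b)" for a b
    unfolding H_def using h00 h10 h01 h11 by auto
  have inner: "(\<Sum>b\<le>q div 2. normsq_x m ^ a * normsq_u m ^ b * H a b) =
      normsq_x m ^ a * H a 0 + normsq_x m ^ a * normsq_u m * H a 1" for a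
    by (subst sum_atMost_eq_first_two) (use zq in \<open>auto simp: H_def\<close>)
  have "(\<Sum>a\<le>p div 2. \<Sum>b\<le>q div 2. normsq_x m ^ a * normsq_u m ^ b * H a b)
      = (\<Sum>a\<le>p div 2. normsq_x m ^ a * H a 0 + normsq_x m ^ a * normsq_u m * H a 1)"
    by (simp only: inner)
  also have "\<dots> = h00 + normsq_x m * h10 + normsq_u m * h01 + normsq_x m * (normsq_u m * h11)"
    by (subst sum_atMost_eq_first_two) (use zp in \<open>auto simp: H_def algebra_simps\<close>)
  finally have "P = (\<Sum>a\<le>p div 2. \<Sum>b\<le>q div 2. normsq_x m ^ a * normsq_u m ^ b * H a b)"
    using Pe by simp
  from pi_s_eqI[OF P H this] show ?thesis by (simp add: H_def)
qed

section \<open>Closed formulas for \<open>S\<^sub>u\<close>, \<open>S\<^sub>x\<close> and \<open>C\<close> on harmonic polynomials\<close>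

text \<open>\<open>\<Delta>\<^sub>x (|x|\<^sup>2 F) = 2 (m + 2p - 2) F\<close> for harmonic \<open>F\<close> of \<open>x\<close>-degree \<open>p - 1\<close>. All
  closed formulas divide by this factor, which is why they need \<open>m > 2\<close>.\<close>

definition lap_scale :: "nat \<Rightarrow> nat \<Rightarrow> complex" where "lap_scale m n = of_nat m + 2 * of_nat n - 2"

lemma lap_scale_nonzero: "m > 2 \<Longrightarrow> lap_scale m n \<noteq> 0"
proof
  assume "m > 2" "lap_scale m n = 0"
  then have "(of_nat (m + 2*n) :: complex) = of_nat 2" unfolding lap_scale_def by (simp add: algebra_simps)
  then have "m + 2*n = 2" using of_nat_eq_iff by blast
  then show False using \<open>m > 2\<close> by simp
qed

text \<open>\<open>\<langle>u,\<partial>\<^sub>x\<rangle> h\<close>, \<open>\<langle>x,\<partial>\<^sub>u\<rangle> h\<close> and \<open>\<langle>u,x\<rangle> h\<close> corrected by elements of the ideal so as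
  to become harmonic: \<open>\<Delta>\<^sub>u \<langle>u,\<partial>\<^sub>x\<rangle> h = 2 \<langle>\<partial>\<^sub>u,\<partial>\<^sub>x\<rangle> h\<close> is cancelled by the
  \<open>|u|\<^sup>2 \<langle>\<partial>\<^sub>u,\<partial>\<^sub>x\<rangle> h\<close> term, and similarly for the others.\<close>

definition Su_formula :: "nat \<Rightarrow> nat \<Rightarrow> cpoly \<Rightarrow> cpoly" where
  "Su_formula m q h = u_dx m h - pconst (1 / lap_scale m q) * (normsq_u m * du_dx m h)"
definition Sx_formula :: "nat \<Rightarrow> nat \<Rightarrow> cpoly \<Rightarrow> cpoly" where
  "Sx_formula m p h = x_du m h - pconst (1 / lap_scale m p) * (normsq_x m * du_dx m h)"
definition C_formula :: "nat \<Rightarrow> nat \<Rightarrow> nat \<Rightarrow> cpoly \<Rightarrow> cpoly" where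
  "C_formula m p q h = ux m * h - pconst (1 / lap_scale m p) * (normsq_x m * Su_formula m q h) - pconst (1 / lap_scale m q) * (normsq_u m * Sx_formula m p h)
     - pconst (1 / (lap_scale m p * lap_scale m q)) * (normsq_x m * (normsq_u m * du_dx m h))"

definition S_x :: "nat \<Rightarrow> cpoly \<Rightarrow> cpoly" where "S_x m h = pi_s m (x_du m h)"

lemma Harm_pconst_mult: "h \<in> Harm m p q \<Longrightarrow> pconst c * h \<in> Harm m p q"
  by (simp add: Harm_def Pspace_pconst_mult linear_op_simps)

lemma Harm_du_dx: "h \<in> Harm m p q \<Longrightarrow> du_dx m h \<in> Harm m (p-1) (q-1)"
  using Pspace_du_dx[of h m p q] lap_x_du_dx[of m h] lap_u_du_dx[of m h] by (auto simp: Harm_def)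

lemmas pconst_expand =
  pconst_add[symmetric] pconst_mult[symmetric] pconst_diff[symmetric] pconst_numeral pconst_of_nat

lemma lap_x_normsq_x_mult_harmonic:
  assumes "F \<in> Pspace m (p - 1) q'" "lap_x m F = 0" "p = 0 \<Longrightarrow> F = 0"
  shows "lap_x m (normsq_x m * F) = pconst (2 * lap_scale m p) * F"
proof (cases "p = 0")
  case True then show ?thesis using assms by simp
next
  case False
  have "lap_x m (normsq_x m * F) = 4 * (of_nat (p - 1) * F) + 2 * of_nat m * F"
    using assms lap_x_normsq_x_mult[of m F] euler_x_Pspace[OF assms(1)] by simp
  also have "pconst (2 * lap_scale m p) = 4 * of_nat (p - 1) + 2 * of_nat m"
    using False by (simp add: lap_scale_def pconst_expand of_nat_diff algebra_simps)
  then have "4 * (of_nat (p - 1) * F) + 2 * of_nat m * F = pconst (2 * lap_scale m p) * F" by algebra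
  finally show ?thesis .
qed

lemma lap_u_normsq_u_mult_harmonic:
  assumes "F \<in> Pspace m p' (q - 1)" "lap_u m F = 0" "q = 0 \<Longrightarrow> F = 0"
  shows "lap_u m (normsq_u m * F) = pconst (2 * lap_scale m q) * F"
proof (cases "q = 0")
  case True then show ?thesis using assms by simp
next
  case False
  have "lap_u m (normsq_u m * F) = 4 * (of_nat (q - 1) * F) + 2 * of_nat m * F"
    using assms lap_u_normsq_u_mult[of m F] euler_u_Pspace[OF assms(1)] by simp
  also have "pconst (2 * lap_scale m q) = 4 * of_nat (q - 1) + 2 * of_nat m"
    using False by (simp add: lap_scale_def pconst_expand of_nat_diff algebra_simps)
  then have "4 * (of_nat (q - 1) * F) + 2 * of_nat m * F = pconst (2 * lap_scale m q) * F" by algebra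
  finally show ?thesis .
qed

lemma Pspace_normsq_u_du_dx: assumes "h \<in> Harm m p q" shows "normsq_u m * du_dx m h \<in> Pspace m (p-1) (q+1)"
proof (cases "q = 0")
  case True then show ?thesis using du_dx_Harm_0_right assms by simp
next
  case False then show ?thesis using Pspace_normsq_u_mult[OF HarmD(1)[OF Harm_du_dx[OF assms]]] by simp
qed

lemma Pspace_normsq_x_du_dx: assumes "h \<in> Harm m p q" shows "normsq_x m * du_dx m h \<in> Pspace m (p+1) (q-1)"
proof (cases "p = 0")
  case True then show ?thesis using du_dx_Harm_0_left assms by simp
next
  case False then show ?thesis using Pspace_normsq_x_mult[OF HarmD(1)[OF Harm_du_dx[OF assms]]] by simp
qed

lemma Su_formula_Pspace: "h \<in> Harm m p q \<Longrightarrow> Su_formula m q h \<in> Pspace m (p-1) (q+1)"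
  unfolding Su_formula_def by (intro Pspace_diff Pspace_pconst_mult Pspace_normsq_u_du_dx Pspace_u_dx HarmD(1))
lemma Sx_formula_Pspace: "h \<in> Harm m p q \<Longrightarrow> Sx_formula m p h \<in> Pspace m (p+1) (q-1)"
  unfolding Sx_formula_def by (intro Pspace_diff Pspace_pconst_mult Pspace_normsq_x_du_dx Pspace_x_du HarmD(1))

lemma Su_formula_Harm_0: "h \<in> Harm m 0 q \<Longrightarrow> Su_formula m q h = 0"
  unfolding Su_formula_def using du_dx_Harm_0_left[of h m q] u_dx_Pspace_0[OF HarmD(1)] by simp
lemma Sx_formula_Harm_0: "h \<in> Harm m p 0 \<Longrightarrow> Sx_formula m p h = 0"
  unfolding Sx_formula_def using du_dx_Harm_0_right[of h m p] x_du_Pspace_0[OF HarmD(1)] by simp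

lemma Su_formula_Harm: assumes "m > 2" "h \<in> Harm m p q" shows "Su_formula m q h \<in> Harm m (p-1) (q+1)"
proof -
  note hD = HarmD[OF Harm_du_dx[OF assms(2)]]
  have lx: "lap_x m (Su_formula m q h) = 0"
    unfolding Su_formula_def using HarmD[OF assms(2)] hD by (simp add: linear_op_simps lap_x_u_dx lap_x_normsq_u_mult)
  have e: "lap_u m (normsq_u m * du_dx m h) = pconst (2 * lap_scale m q) * du_dx m h"
    by (rule lap_u_normsq_u_mult_harmonic[OF hD(1) hD(3)]) (use du_dx_Harm_0_right assms(2) in auto)
  have "lap_u m (Su_formula m q h) = 2 * du_dx m h - pconst (1 / lap_scale m q) * (pconst (2 * lap_scale m q) * du_dx m h)"
    unfolding Su_formula_def using HarmD[OF assms(2)] by (simp add: linear_op_simps lap_u_u_dx e)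
  also have "\<dots> = 0" using lap_scale_nonzero[OF assms(1), of q] by (simp add: pconst_numeral)
  finally show ?thesis using lx Su_formula_Pspace[OF assms(2)] by (simp add: Harm_def)
qed

lemma Sx_formula_Harm: assumes "m > 2" "h \<in> Harm m p q" shows "Sx_formula m p h \<in> Harm m (p+1) (q-1)"
proof -
  note hD = HarmD[OF Harm_du_dx[OF assms(2)]]
  have lu: "lap_u m (Sx_formula m p h) = 0"
    unfolding Sx_formula_def using HarmD[OF assms(2)] hD by (simp add: linear_op_simps lap_u_x_du lap_u_normsq_x_mult)
  have e: "lap_x m (normsq_x m * du_dx m h) = pconst (2 * lap_scale m p) * du_dx m h"
    by (rule lap_x_normsq_x_mult_harmonic[OF hD(1) hD(2)]) (use du_dx_Harm_0_left assms(2) in auto)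
  have "lap_x m (Sx_formula m p h) = 2 * du_dx m h - pconst (1 / lap_scale m p) * (pconst (2 * lap_scale m p) * du_dx m h)"
    unfolding Sx_formula_def using HarmD[OF assms(2)] by (simp add: linear_op_simps lap_x_x_du e)
  also have "\<dots> = 0" using lap_scale_nonzero[OF assms(1), of p] by (simp add: pconst_numeral)
  finally show ?thesis using lu Sx_formula_Pspace[OF assms(2)] by (simp add: Harm_def)
qed

lemma C_formula_Pspace: assumes "h \<in> Harm m p q" shows "C_formula m p q h \<in> Pspace m (p+1) (q+1)"
proof -
  have a: "normsq_x m * Su_formula m q h \<in> Pspace m (p+1) (q+1)"
  proof (cases "p = 0")
    case True then show ?thesis using Su_formula_Harm_0 assms by simp
  next
    case False then show ?thesis using Pspace_normsq_x_mult[OF Su_formula_Pspace[OF assms]] by simp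
  qed
  have b: "normsq_u m * Sx_formula m p h \<in> Pspace m (p+1) (q+1)"
  proof (cases "q = 0")
    case True then show ?thesis using Sx_formula_Harm_0 assms by simp
  next
    case False then show ?thesis using Pspace_normsq_u_mult[OF Sx_formula_Pspace[OF assms]] by simp
  qed
  have c: "normsq_x m * (normsq_u m * du_dx m h) \<in> Pspace m (p+1) (q+1)"
  proof (cases "p = 0")
    case True then show ?thesis using du_dx_Harm_0_left assms by simp
  next
    case False then show ?thesis using Pspace_normsq_x_mult[OF Pspace_normsq_u_du_dx[OF assms]] by simp
  qed
  show ?thesis unfolding C_formula_def
    by (intro Pspace_diff Pspace_pconst_mult a b c Pspace_ux_mult HarmD(1)[OF assms])
qed

lemma C_formula_Harm: assumes "m > 2" "h \<in> Harm m p q" shows "C_formula m p q h \<in> Harm m (p+1) (q+1)"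
proof -
  note h = HarmD[OF assms(2)]
  note hD = HarmD[OF Harm_du_dx[OF assms(2)]]
  note su = HarmD[OF Su_formula_Harm[OF assms]]
  note sx = HarmD[OF Sx_formula_Harm[OF assms]]
  have c1: "lap_scale m p \<noteq> 0" "lap_scale m q \<noteq> 0" using lap_scale_nonzero[OF assms(1)] by auto
  have e1: "lap_x m (normsq_x m * Su_formula m q h) = pconst (2 * lap_scale m p) * Su_formula m q h"
    by (rule lap_x_normsq_x_mult_harmonic[OF su(1) su(2)]) (use Su_formula_Harm_0 assms(2) in auto)
  have e2: "lap_x m (normsq_x m * (normsq_u m * du_dx m h)) = pconst (2 * lap_scale m p) * (normsq_u m * du_dx m h)"
    by (rule lap_x_normsq_x_mult_harmonic[OF Pspace_normsq_u_du_dx[OF assms(2)]])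
      (use hD du_dx_Harm_0_left assms(2) in \<open>auto simp: lap_x_normsq_u_mult\<close>)
  have e3: "lap_u m (normsq_u m * Sx_formula m p h) = pconst (2 * lap_scale m q) * Sx_formula m p h"
    by (rule lap_u_normsq_u_mult_harmonic[OF sx(1) sx(3)]) (use Sx_formula_Harm_0 assms(2) in auto)
  have e4: "lap_u m (normsq_u m * du_dx m h) = pconst (2 * lap_scale m q) * du_dx m h"
    by (rule lap_u_normsq_u_mult_harmonic[OF hD(1) hD(3)]) (use du_dx_Harm_0_right assms(2) in auto)
  have lx: "lap_x m (C_formula m p q h) = 0"
    unfolding C_formula_def using h su sx c1
    by (simp add: linear_op_simps lap_x_ux_mult lap_x_normsq_u_mult e1 e2) (simp add: Su_formula_def algebra_simps pconst_mult pconst_numeral)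
  have lu: "lap_u m (C_formula m p q h) = 0"
    unfolding C_formula_def using h su sx c1
    by (simp add: linear_op_simps lap_u_ux_mult lap_u_normsq_x_mult e3 e4) (simp add: Sx_formula_def algebra_simps normsq_x_pconst_mult pconst_mult pconst_numeral)
  show ?thesis using lx lu C_formula_Pspace[OF assms(2)] by (simp add: Harm_def)
qed

lemma S_u_eq_formula: assumes "m > 2" "h \<in> Harm m p q" shows "S_u m h = Su_formula m q h"
  unfolding S_u_def
proof (rule pi_s_eq_of_decomp[where ?h10.0 = 0 and ?h11.0 = 0 and ?h01.0 = "pconst (1 / lap_scale m q) * du_dx m h"])
  show "u_dx m h \<in> Pspace m (p-1) (q+1)" by (rule Pspace_u_dx[OF HarmD(1)[OF assms(2)]])
  show "Su_formula m q h \<in> Harm m (p-1) (q+1)" by (rule Su_formula_Harm[OF assms])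
  show "pconst (1 / lap_scale m q) * du_dx m h \<in> Harm m (p - 1) (q + 1 - 2)"
    using Harm_pconst_mult[OF Harm_du_dx[OF assms(2)]] by (simp add: numeral_2_eq_2)
  show "q + 1 < 2 \<Longrightarrow> pconst (1 / lap_scale m q) * du_dx m h = 0 \<and> (0::cpoly) = 0" using du_dx_Harm_0_right assms(2) by auto
  show "u_dx m h = Su_formula m q h + normsq_x m * 0 + normsq_u m * (pconst (1 / lap_scale m q) * du_dx m h) + normsq_x m * (normsq_u m * 0)"
    by (simp add: Su_formula_def normsq_u_pconst_mult)
qed auto

lemma S_x_eq_formula: assumes "m > 2" "h \<in> Harm m p q" shows "S_x m h = Sx_formula m p h"
  unfolding S_x_def
proof (rule pi_s_eq_of_decomp[where ?h01.0 = 0 and ?h11.0 = 0 and ?h10.0 = "pconst (1 / lap_scale m p) * du_dx m h"])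
  show "x_du m h \<in> Pspace m (p+1) (q-1)" by (rule Pspace_x_du[OF HarmD(1)[OF assms(2)]])
  show "Sx_formula m p h \<in> Harm m (p+1) (q-1)" by (rule Sx_formula_Harm[OF assms])
  show "pconst (1 / lap_scale m p) * du_dx m h \<in> Harm m (p + 1 - 2) (q - 1)"
    using Harm_pconst_mult[OF Harm_du_dx[OF assms(2)]] by (simp add: numeral_2_eq_2)
  show "p + 1 < 2 \<Longrightarrow> pconst (1 / lap_scale m p) * du_dx m h = 0 \<and> (0::cpoly) = 0" using du_dx_Harm_0_left assms(2) by auto
  show "x_du m h = Sx_formula m p h + normsq_x m * (pconst (1 / lap_scale m p) * du_dx m h) + normsq_u m * 0 + normsq_x m * (normsq_u m * 0)"
    by (simp add: Sx_formula_def normsq_x_pconst_mult)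
qed auto

lemma C_op_eq_formula: assumes "m > 2" "h \<in> Harm m p q" shows "C_op m h = C_formula m p q h"
  unfolding C_op_def
proof (rule pi_s_eq_of_decomp[where ?h10.0 = "pconst (1 / lap_scale m p) * Su_formula m q h" and ?h01.0 = "pconst (1 / lap_scale m q) * Sx_formula m p h"
     and ?h11.0 = "pconst (1 / (lap_scale m p * lap_scale m q)) * du_dx m h"])
  show "ux m * h \<in> Pspace m (p+1) (q+1)" by (rule Pspace_ux_mult[OF HarmD(1)[OF assms(2)]])
  show "C_formula m p q h \<in> Harm m (p+1) (q+1)" by (rule C_formula_Harm[OF assms])
  show "pconst (1 / lap_scale m p) * Su_formula m q h \<in> Harm m (p + 1 - 2) (q + 1)"
    using Harm_pconst_mult[OF Su_formula_Harm[OF assms]] by (simp add: numeral_2_eq_2)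
  show "pconst (1 / lap_scale m q) * Sx_formula m p h \<in> Harm m (p + 1) (q + 1 - 2)"
    using Harm_pconst_mult[OF Sx_formula_Harm[OF assms]] by (simp add: numeral_2_eq_2)
  show "pconst (1 / (lap_scale m p * lap_scale m q)) * du_dx m h \<in> Harm m (p + 1 - 2) (q + 1 - 2)"
    using Harm_pconst_mult[OF Harm_du_dx[OF assms(2)]] by (simp add: numeral_2_eq_2)
  show "p + 1 < 2 \<Longrightarrow> pconst (1 / lap_scale m p) * Su_formula m q h = 0 \<and> pconst (1 / (lap_scale m p * lap_scale m q)) * du_dx m h = 0"
    using du_dx_Harm_0_left Su_formula_Harm_0 assms(2) by auto
  show "q + 1 < 2 \<Longrightarrow> pconst (1 / lap_scale m q) * Sx_formula m p h = 0 \<and> pconst (1 / (lap_scale m p * lap_scale m q)) * du_dx m h = 0"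
    using du_dx_Harm_0_right Sx_formula_Harm_0 assms(2) by auto
  show "ux m * h = C_formula m p q h + normsq_x m * (pconst (1 / lap_scale m p) * Su_formula m q h) + normsq_u m * (pconst (1 / lap_scale m q) * Sx_formula m p h)
      + normsq_x m * (normsq_u m * (pconst (1 / (lap_scale m p * lap_scale m q)) * du_dx m h))"
    by (simp add: C_formula_def normsq_x_pconst_mult normsq_u_pconst_mult)
qed

section \<open>Relations modulo the ideal\<close>

definition norm_cong :: "nat \<Rightarrow> cpoly \<Rightarrow> cpoly \<Rightarrow> bool" where
  "norm_cong m a b \<longleftrightarrow> in_norm_ideal m (a - b)"

lemma norm_cong_refl: "norm_cong m a a"
  by (simp add: norm_cong_def)

lemma norm_cong_sym: "norm_cong m a b \<Longrightarrow> norm_cong m b a"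
  unfolding norm_cong_def using in_norm_ideal_uminus by fastforce

lemma norm_cong_trans[trans]: "norm_cong m a b \<Longrightarrow> norm_cong m b c \<Longrightarrow> norm_cong m a c"
  unfolding norm_cong_def using in_norm_ideal_add by fastforce

lemma norm_cong_add: "norm_cong m a b \<Longrightarrow> norm_cong m c d \<Longrightarrow> norm_cong m (a + c) (b + d)"
  unfolding norm_cong_def using in_norm_ideal_add by (fastforce simp: algebra_simps)

lemma norm_cong_diff: "norm_cong m a b \<Longrightarrow> norm_cong m c d \<Longrightarrow> norm_cong m (a - c) (b - d)"
  unfolding norm_cong_def using in_norm_ideal_diff by (fastforce simp: algebra_simps)

lemma norm_cong_mult: "norm_cong m a b \<Longrightarrow> norm_cong m (R * a) (R * b)"
  unfolding norm_cong_def using in_norm_ideal_mult by (fastforce simp: algebra_simps)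

lemma norm_cong_0I: "in_norm_ideal m a \<Longrightarrow> norm_cong m a 0"
  by (simp add: norm_cong_def)

lemma norm_cong_harmonic_eq: "norm_cong m a b \<Longrightarrow> harmonic m a \<Longrightarrow> harmonic m b \<Longrightarrow> a = b"
  unfolding norm_cong_def by (rule in_norm_ideal_harmonic_eq)

lemma u_dx_normsq_x_mult_cong: "norm_cong m (u_dx m (normsq_x m * F)) (2 * (ux m * F))"
  unfolding u_dx_normsq_x_mult norm_cong_def by (simp add: mult.assoc)

lemma u_dx_normsq_u_mult_cong: "norm_cong m (u_dx m (normsq_u m * F)) 0"
  unfolding u_dx_normsq_u_mult by (simp add: norm_cong_0I)

lemma u_dx_ux_mult_cong: "norm_cong m (u_dx m (ux m * F)) (ux m * u_dx m F)"
  unfolding u_dx_ux_mult norm_cong_def by simp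

lemma x_du_normsq_u_mult_cong: "norm_cong m (x_du m (normsq_u m * F)) (2 * (ux m * F))"
  unfolding x_du_normsq_u_mult norm_cong_def by (simp add: mult.assoc)

lemma x_du_normsq_x_mult_cong: "norm_cong m (x_du m (normsq_x m * F)) 0"
  unfolding x_du_normsq_x_mult by (simp add: norm_cong_0I)

lemma x_du_ux_mult_cong: "norm_cong m (x_du m (ux m * F)) (ux m * x_du m F)"
  unfolding x_du_ux_mult norm_cong_def by simp

lemma du_dx_normsq_x_mult_cong: "norm_cong m (du_dx m (normsq_x m * F)) (2 * x_du m F)"
  unfolding du_dx_normsq_x_mult norm_cong_def by simp

lemma du_dx_normsq_u_mult_cong: "norm_cong m (du_dx m (normsq_u m * F)) (2 * u_dx m F)"
  unfolding du_dx_normsq_u_mult norm_cong_def by simp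

lemma Su_formula_cong: "norm_cong m (Su_formula m q F) (u_dx m F)"
  unfolding Su_formula_def norm_cong_def
  by simp (intro in_norm_ideal_uminus in_norm_ideal_mult in_norm_ideal_normsq_u_mult)

lemma Sx_formula_cong: "norm_cong m (Sx_formula m p F) (x_du m F)"
  unfolding Sx_formula_def norm_cong_def
  by simp (intro in_norm_ideal_uminus in_norm_ideal_mult in_norm_ideal_normsq_x_mult)

lemma C_formula_cong: "norm_cong m (C_formula m p q F) (ux m * F)"
  unfolding C_formula_def norm_cong_def
  by (simp add: normsq_x_pconst_mult normsq_u_pconst_mult in_norm_ideal_mult in_norm_ideal_diff
      in_norm_ideal_uminus)

lemma Su_formula_C_formula_cong:
  "norm_cong m (Su_formula m (q + 1) (C_formula m p q h))
     (pconst (1 - 2 / lap_scale m p) * C_formula m (p - 1) (q + 1) (Su_formula m q h))"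
proof -
  let ?S = "Su_formula m q h" and ?X = "Sx_formula m p h" and ?D = "du_dx m h"
  let ?a = "pconst (1 / lap_scale m p)" and ?b = "pconst (1 / lap_scale m q)"
    and ?g = "pconst (1 / (lap_scale m p * lap_scale m q))"
  have "norm_cong m (Su_formula m (q + 1) (C_formula m p q h)) (u_dx m (C_formula m p q h))"
    by (rule Su_formula_cong)
  also have "u_dx m (C_formula m p q h) = u_dx m (ux m * h) - ?a * u_dx m (normsq_x m * ?S)
      - ?b * u_dx m (normsq_u m * ?X) - ?g * u_dx m (normsq_x m * (normsq_u m * ?D))"
    unfolding C_formula_def by (simp add: linear_op_simps)
  also have "norm_cong m \<dots>
      (ux m * u_dx m h - ?a * (2 * (ux m * ?S)) - ?b * 0 - ?g * (2 * (ux m * (normsq_u m * ?D))))"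
    by (intro norm_cong_diff norm_cong_mult u_dx_ux_mult_cong u_dx_normsq_x_mult_cong
        u_dx_normsq_u_mult_cong)
  also have "norm_cong m \<dots> (ux m * ?S - ?a * (2 * (ux m * ?S)) - ?b * 0 - ?g * 0)"
    by (intro norm_cong_diff norm_cong_mult norm_cong_refl norm_cong_sym[OF Su_formula_cong]
        norm_cong_0I in_norm_ideal_mult in_norm_ideal_normsq_u_mult)
  also have "ux m * ?S - ?a * (2 * (ux m * ?S)) - ?b * 0 - ?g * 0
      = pconst (1 - 2 / lap_scale m p) * (ux m * ?S)"
    by (simp add: pconst_diff[symmetric] pconst_mult[symmetric] pconst_numeral algebra_simps)
  also have "norm_cong m \<dots> (pconst (1 - 2 / lap_scale m p) * C_formula m (p - 1) (q + 1) ?S)"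
    by (intro norm_cong_mult norm_cong_sym[OF C_formula_cong])
  finally show ?thesis .
qed

lemma Sx_formula_C_formula_cong:
  "norm_cong m (Sx_formula m (p + 1) (C_formula m p q h))
     (pconst (1 - 2 / lap_scale m q) * C_formula m (p + 1) (q - 1) (Sx_formula m p h))"
proof -
  let ?S = "Su_formula m q h" and ?X = "Sx_formula m p h" and ?D = "du_dx m h"
  let ?a = "pconst (1 / lap_scale m p)" and ?b = "pconst (1 / lap_scale m q)"
    and ?g = "pconst (1 / (lap_scale m p * lap_scale m q))"
  have "norm_cong m (Sx_formula m (p + 1) (C_formula m p q h)) (x_du m (C_formula m p q h))"
    by (rule Sx_formula_cong)
  also have "x_du m (C_formula m p q h) = x_du m (ux m * h) - ?a * x_du m (normsq_x m * ?S)
      - ?b * x_du m (normsq_u m * ?X) - ?g * x_du m (normsq_x m * (normsq_u m * ?D))"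
    unfolding C_formula_def by (simp add: linear_op_simps)
  also have "norm_cong m \<dots> (ux m * x_du m h - ?a * 0 - ?b * (2 * (ux m * ?X)) - ?g * 0)"
    by (intro norm_cong_diff norm_cong_mult x_du_ux_mult_cong x_du_normsq_x_mult_cong
        x_du_normsq_u_mult_cong)
  also have "norm_cong m \<dots> (ux m * ?X - ?a * 0 - ?b * (2 * (ux m * ?X)) - ?g * 0)"
    by (intro norm_cong_diff norm_cong_mult norm_cong_refl norm_cong_sym[OF Sx_formula_cong])
  also have "ux m * ?X - ?a * 0 - ?b * (2 * (ux m * ?X)) - ?g * 0
      = pconst (1 - 2 / lap_scale m q) * (ux m * ?X)"
    by (simp add: pconst_diff[symmetric] pconst_mult[symmetric] pconst_numeral algebra_simps)
  also have "norm_cong m \<dots> (pconst (1 - 2 / lap_scale m q) * C_formula m (p + 1) (q - 1) ?X)"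
    by (intro norm_cong_mult norm_cong_sym[OF C_formula_cong])
  finally show ?thesis .
qed

lemma x_du_normsq_u_mult_cong_C_formula:
  "norm_cong m (x_du m (normsq_u m * F)) (2 * C_formula m p q F)"
proof -
  have "norm_cong m (x_du m (normsq_u m * F)) (2 * (ux m * F))"
    by (rule x_du_normsq_u_mult_cong)
  also have "norm_cong m \<dots> (2 * C_formula m p q F)"
    by (intro norm_cong_mult norm_cong_sym[OF C_formula_cong])
  finally show ?thesis .
qed

lemma du_dx_C_formula_cong:
  assumes h: "h \<in> Pspace m p q"
  shows "norm_cong m (du_dx m (C_formula m p q h))
     (pconst (1 - 4 / (lap_scale m p * lap_scale m q)) * C_formula m (p - 1) (q - 1) (du_dx m h)
      + pconst (of_nat p + of_nat q + of_nat m) * h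
      - pconst (2 / lap_scale m p) * Sx_formula m (p - 1) (Su_formula m q h)
      - pconst (2 / lap_scale m q) * Su_formula m (q - 1) (Sx_formula m p h))"
proof -
  let ?S = "Su_formula m q h" and ?X = "Sx_formula m p h" and ?D = "du_dx m h"
  let ?a = "pconst (1 / lap_scale m p)" and ?b = "pconst (1 / lap_scale m q)"
    and ?g = "pconst (1 / (lap_scale m p * lap_scale m q))"
  let ?CD = "C_formula m (p - 1) (q - 1) ?D" and ?E = "of_nat p * h + of_nat q * h + of_nat m * h"
  have expand: "du_dx m (C_formula m p q h) = (ux m * ?D + ?E) - ?a * du_dx m (normsq_x m * ?S)
      - ?b * du_dx m (normsq_u m * ?X) - ?g * du_dx m (normsq_x m * (normsq_u m * ?D))"
    unfolding C_formula_def
    by (simp add: linear_op_simps du_dx_ux_mult euler_x_Pspace[OF h] euler_u_Pspace[OF h] add.assoc)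
  have collect: "(?CD + ?E) - ?a * (2 * Sx_formula m (p - 1) ?S) - ?b * (2 * Su_formula m (q - 1) ?X)
      - ?g * (2 * (2 * ?CD))
    = pconst (1 - 4 / (lap_scale m p * lap_scale m q)) * ?CD
      + pconst (of_nat p + of_nat q + of_nat m) * h
      - pconst (2 / lap_scale m p) * Sx_formula m (p - 1) ?S
      - pconst (2 / lap_scale m q) * Su_formula m (q - 1) ?X"
    by (simp add: pconst_diff[symmetric] pconst_mult[symmetric] pconst_add[symmetric] pconst_numeral
        pconst_of_nat algebra_simps)
  have "norm_cong m ((ux m * ?D + ?E) - ?a * du_dx m (normsq_x m * ?S)
      - ?b * du_dx m (normsq_u m * ?X) - ?g * du_dx m (normsq_x m * (normsq_u m * ?D)))
    ((ux m * ?D + ?E) - ?a * (2 * x_du m ?S) - ?b * (2 * u_dx m ?X) - ?g * (2 * x_du m (normsq_u m * ?D)))"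
    by (intro norm_cong_diff norm_cong_mult norm_cong_refl du_dx_normsq_x_mult_cong
        du_dx_normsq_u_mult_cong)
  also have "norm_cong m \<dots> ((?CD + ?E) - ?a * (2 * Sx_formula m (p - 1) ?S)
      - ?b * (2 * Su_formula m (q - 1) ?X) - ?g * (2 * (2 * ?CD)))"
    by (intro norm_cong_diff norm_cong_add norm_cong_mult norm_cong_refl x_du_normsq_u_mult_cong_C_formula
        norm_cong_sym[OF Sx_formula_cong] norm_cong_sym[OF Su_formula_cong] norm_cong_sym[OF C_formula_cong])
  finally show ?thesis unfolding expand collect .
qed

context
  fixes m :: nat
  assumes m: "m > 2"
begin

lemma Su_formula_C_formula:
  assumes "h \<in> Harm m p q"
  shows "Su_formula m (q + 1) (C_formula m p q h)
    = pconst (1 - 2 / lap_scale m p) * C_formula m (p - 1) (q + 1) (Su_formula m q h)"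
  by (rule norm_cong_harmonic_eq[OF Su_formula_C_formula_cong])
    (use assms in \<open>meson m Harm_harmonic harmonic_pconst_mult C_formula_Harm Su_formula_Harm\<close>)+

lemma Sx_formula_C_formula:
  assumes "h \<in> Harm m p q"
  shows "Sx_formula m (p + 1) (C_formula m p q h)
    = pconst (1 - 2 / lap_scale m q) * C_formula m (p + 1) (q - 1) (Sx_formula m p h)"
  by (rule norm_cong_harmonic_eq[OF Sx_formula_C_formula_cong])
    (use assms in \<open>meson m Harm_harmonic harmonic_pconst_mult C_formula_Harm Sx_formula_Harm\<close>)+

lemma du_dx_C_formula:
  assumes h: "h \<in> Harm m p q"
  shows "du_dx m (C_formula m p q h)
    = pconst (1 - 4 / (lap_scale m p * lap_scale m q)) * C_formula m (p - 1) (q - 1) (du_dx m h)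
      + pconst (of_nat p + of_nat q + of_nat m) * h
      - pconst (2 / lap_scale m p) * Sx_formula m (p - 1) (Su_formula m q h)
      - pconst (2 / lap_scale m q) * Su_formula m (q - 1) (Sx_formula m p h)"
proof (rule norm_cong_harmonic_eq[OF du_dx_C_formula_cong[OF HarmD(1)[OF h]]])
  show "harmonic m (du_dx m (C_formula m p q h))"
    by (meson m h Harm_harmonic Harm_du_dx C_formula_Harm)
  have "harmonic m (C_formula m (p - 1) (q - 1) (du_dx m h))" "harmonic m h"
    "harmonic m (Sx_formula m (p - 1) (Su_formula m q h))"
    "harmonic m (Su_formula m (q - 1) (Sx_formula m p h))"
    by (meson m h Harm_harmonic Harm_du_dx C_formula_Harm Su_formula_Harm Sx_formula_Harm)+
  then show "harmonic m (pconst (1 - 4 / (lap_scale m p * lap_scale m q))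
      * C_formula m (p - 1) (q - 1) (du_dx m h) + pconst (of_nat p + of_nat q + of_nat m) * h
      - pconst (2 / lap_scale m p) * Sx_formula m (p - 1) (Su_formula m q h)
      - pconst (2 / lap_scale m q) * Su_formula m (q - 1) (Sx_formula m p h))"
    by (intro harmonic_add harmonic_diff harmonic_pconst_mult)
qed

end

section \<open>Orthogonality\<close>

definition multiple_of :: "cpoly \<Rightarrow> cpoly \<Rightarrow> bool" where
  "multiple_of X Y \<longleftrightarrow> (\<exists>c. X = pconst c * Y)"

lemma multiple_of_zero[simp]: "multiple_of 0 Y"
  unfolding multiple_of_def by (rule exI[of _ 0]) simp

lemma multiple_of_refl: "multiple_of Y Y"
  unfolding multiple_of_def by (rule exI[of _ 1]) simp

lemma multiple_of_pconst_mult_self: "multiple_of (pconst c * Y) Y"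
  unfolding multiple_of_def by blast

lemma multiple_of_add: "multiple_of A Y \<Longrightarrow> multiple_of B Y \<Longrightarrow> multiple_of (A + B) Y"
  unfolding multiple_of_def by (metis pconst_add distrib_right)

lemma multiple_of_diff: "multiple_of A Y \<Longrightarrow> multiple_of B Y \<Longrightarrow> multiple_of (A - B) Y"
  unfolding multiple_of_def by (metis pconst_diff left_diff_distrib)

lemma multiple_of_pconst_mult: "multiple_of A Y \<Longrightarrow> multiple_of (pconst c * A) Y"
  unfolding multiple_of_def by (metis pconst_mult_pconst_mult)

lemma multiple_of_trans[trans]: "multiple_of A B \<Longrightarrow> multiple_of B C \<Longrightarrow> multiple_of A C"
  unfolding multiple_of_def by (metis pconst_mult_pconst_mult)

lemma Su_formula_pconst_mult: "Su_formula m q (pconst c * h) = pconst c * Su_formula m q h"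
  by (simp add: Su_formula_def linear_op_simps normsq_u_pconst_mult right_diff_distrib)

lemma Sx_formula_pconst_mult: "Sx_formula m p (pconst c * h) = pconst c * Sx_formula m p h"
  by (simp add: Sx_formula_def linear_op_simps normsq_x_pconst_mult right_diff_distrib)

lemma C_formula_pconst_mult: "C_formula m p q (pconst c * h) = pconst c * C_formula m p q h"
  by (simp add: C_formula_def linear_op_simps normsq_x_pconst_mult normsq_u_pconst_mult
      ux_pconst_mult Su_formula_pconst_mult Sx_formula_pconst_mult right_diff_distrib)

lemma Hspace_Harm: "G \<in> Hspace m a b \<Longrightarrow> G \<in> Harm m a b"
  by (simp add: Hspace_def Harm_def)

lemma Hspace_du_dx: "G \<in> Hspace m a b \<Longrightarrow> du_dx m G = 0"
  by (simp add: Hspace_def)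

lemma Hspace_x_du: "G \<in> Hspace m a b \<Longrightarrow> x_du m G = 0"
  by (simp add: Hspace_def)

definition CS_pow :: "nat \<Rightarrow> cpoly \<Rightarrow> nat \<Rightarrow> nat \<Rightarrow> cpoly" where
  "CS_pow m G i j = (C_op m ^^ i) ((S_u m ^^ j) G)"

lemma CS_pow_0: "CS_pow m G 0 j = (S_u m ^^ j) G"
  by (simp add: CS_pow_def)

lemma CS_pow_Suc: "CS_pow m G (Suc i) j = C_op m (CS_pow m G i j)"
  by (simp add: CS_pow_def)

context
  fixes m :: nat
  assumes m: "m > 2"
begin

lemma S_u_Harm: "h \<in> Harm m p q \<Longrightarrow> S_u m h \<in> Harm m (p - 1) (q + 1)"
  using S_u_eq_formula[OF m] Su_formula_Harm[OF m] by simp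

lemma C_op_Harm: "h \<in> Harm m p q \<Longrightarrow> C_op m h \<in> Harm m (p + 1) (q + 1)"
  using C_op_eq_formula[OF m] C_formula_Harm[OF m] by simp

lemma S_u_eq_u_dx: "h \<in> Harm m p q \<Longrightarrow> du_dx m h = 0 \<Longrightarrow> S_u m h = u_dx m h"
  using S_u_eq_formula[OF m] by (simp add: Su_formula_def)

lemma S_x_eq_x_du: "h \<in> Harm m p q \<Longrightarrow> du_dx m h = 0 \<Longrightarrow> S_x m h = x_du m h"
  using S_x_eq_formula[OF m] by (simp add: Sx_formula_def)

lemma multiple_of_S_u:
  "h \<in> Harm m p q \<Longrightarrow> multiple_of h' h \<Longrightarrow> multiple_of (S_u m h') (S_u m h)"
  unfolding multiple_of_def
  by (metis S_u_eq_formula[OF m] Harm_pconst_mult Su_formula_pconst_mult)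

lemma multiple_of_S_x:
  "h \<in> Harm m p q \<Longrightarrow> multiple_of h' h \<Longrightarrow> multiple_of (S_x m h') (S_x m h)"
  unfolding multiple_of_def
  by (metis S_x_eq_formula[OF m] Harm_pconst_mult Sx_formula_pconst_mult)

lemma multiple_of_C_op:
  "h \<in> Harm m p q \<Longrightarrow> multiple_of h' h \<Longrightarrow> multiple_of (C_op m h') (C_op m h)"
  unfolding multiple_of_def
  by (metis C_op_eq_formula[OF m] Harm_pconst_mult C_formula_pconst_mult)

lemma S_u_C_op_multiple:
  assumes h: "h \<in> Harm m p q"
  shows "multiple_of (S_u m (C_op m h)) (C_op m (S_u m h))"
proof -
  have "S_u m (C_op m h) = Su_formula m (q + 1) (C_formula m p q h)"
    unfolding C_op_eq_formula[OF m h] by (rule S_u_eq_formula[OF m C_formula_Harm[OF m h]])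
  moreover have "C_op m (S_u m h) = C_formula m (p - 1) (q + 1) (Su_formula m q h)"
    unfolding S_u_eq_formula[OF m h] by (rule C_op_eq_formula[OF m Su_formula_Harm[OF m h]])
  ultimately show ?thesis
    unfolding Su_formula_C_formula[OF m h] by (simp only: multiple_of_pconst_mult_self)
qed

lemma S_x_C_op_multiple:
  assumes h: "h \<in> Harm m p q"
  shows "multiple_of (S_x m (C_op m h)) (C_op m (S_x m h))"
proof -
  have "S_x m (C_op m h) = Sx_formula m (p + 1) (C_formula m p q h)"
    unfolding C_op_eq_formula[OF m h] by (rule S_x_eq_formula[OF m C_formula_Harm[OF m h]])
  moreover have "C_op m (S_x m h) = C_formula m (p + 1) (q - 1) (Sx_formula m p h)"
    unfolding S_x_eq_formula[OF m h] by (rule C_op_eq_formula[OF m Sx_formula_Harm[OF m h]])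
  ultimately show ?thesis
    unfolding Sx_formula_C_formula[OF m h] by (simp only: multiple_of_pconst_mult_self)
qed

lemma du_dx_C_op_eq:
  assumes h: "h \<in> Harm m p q"
  obtains k s t r where "du_dx m (C_op m h) = pconst k * C_op m (du_dx m h) + pconst s * h
     - pconst t * S_x m (S_u m h) - pconst r * S_u m (S_x m h)"
proof -
  note C_op_eq_formula[OF m h] S_u_eq_formula[OF m h] S_x_eq_formula[OF m h]
    C_op_eq_formula[OF m Harm_du_dx[OF h]]
    S_x_eq_formula[OF m Su_formula_Harm[OF m h]] S_u_eq_formula[OF m Sx_formula_Harm[OF m h]]
  with that show ?thesis by (simp only: du_dx_C_formula[OF m h])
qed

text \<open>On harmonic polynomials \<open>C\<close> is still adjoint to \<open>\<langle>\<partial>\<^sub>u,\<partial>\<^sub>x\<rangle>\<close>, because \<open>C h\<close> and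
  \<open>\<langle>u,x\<rangle> h\<close> differ by an element of the ideal.\<close>

lemma fischer_C_op_left:
  assumes h: "h \<in> Harm m p q" and Y: "harmonic m Y"
  shows "fischer (C_op m h) Y = fischer h (du_dx m Y)"
proof -
  have "in_norm_ideal m (C_formula m p q h - ux m * h)"
    using C_formula_cong unfolding norm_cong_def .
  then have "fischer (C_formula m p q h - ux m * h) Y = 0"
    using Y by (rule fischer_norm_ideal_harmonic)
  then show ?thesis
    by (simp add: C_op_eq_formula[OF m h] fischer_diff_left fischer_ux_mult_left)
qed

lemma S_u_funpow_Harm: "G \<in> Hspace m a b \<Longrightarrow> (S_u m ^^ j) G \<in> Harm m (a - j) (b + j)"
  by (induction j) (auto simp: Hspace_Harm diff_Suc dest: S_u_Harm)

lemma du_dx_S_u_funpow: "G \<in> Hspace m a b \<Longrightarrow> du_dx m ((S_u m ^^ j) G) = 0"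
proof (induction j)
  case 0 then show ?case by (simp add: Hspace_du_dx)
next
  case (Suc j)
  have h: "(S_u m ^^ j) G \<in> Harm m (a - j) (b + j)" by (rule S_u_funpow_Harm[OF Suc.prems])
  have "(S_u m ^^ Suc j) G = u_dx m ((S_u m ^^ j) G)"
    using S_u_eq_u_dx[OF h Suc.IH[OF Suc.prems]] by simp
  then show ?case using Suc.IH[OF Suc.prems] HarmD(2)[OF h] by (simp add: du_dx_u_dx)
qed

lemma S_u_funpow_Suc: "G \<in> Hspace m a b \<Longrightarrow> (S_u m ^^ Suc j) G = u_dx m ((S_u m ^^ j) G)"
  using S_u_eq_u_dx[OF S_u_funpow_Harm du_dx_S_u_funpow] by simp

text \<open>\<open>\<langle>x,\<partial>\<^sub>u\<rangle>\<close> lowers the \<open>S\<^sub>u\<close>-chain by the commutator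
  \<open>[\<langle>x,\<partial>\<^sub>u\<rangle>, \<langle>u,\<partial>\<^sub>x\<rangle>] = E\<^sub>x - E\<^sub>u\<close> of Euler operators, which acts by a scalar.\<close>

lemma x_du_S_u_funpow_Suc:
  assumes G: "G \<in> Hspace m a b"
  shows "multiple_of (x_du m ((S_u m ^^ Suc j) G)) ((S_u m ^^ j) G)"
proof (induction j)
  case 0
  have "x_du m ((S_u m ^^ Suc 0) G) = u_dx m (x_du m G) + euler_x m G - euler_u m G"
    using S_u_funpow_Suc[OF G, of 0] by (simp add: x_du_u_dx)
  also have "\<dots> = pconst (of_nat a - of_nat b) * G"
    using Hspace_x_du[OF G] HarmD(1)[OF Hspace_Harm[OF G]]
    by (simp add: euler_x_Pspace euler_u_Pspace pconst_of_nat[symmetric] pconst_diff[symmetric]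
        left_diff_distrib)
  finally show ?case by (simp add: multiple_of_pconst_mult_self)
next
  case (Suc j)
  let ?X = "(S_u m ^^ j) G" and ?Y = "(S_u m ^^ Suc j) G"
  have hY: "?Y \<in> Pspace m (a - Suc j) (b + Suc j)" by (rule HarmD(1)[OF S_u_funpow_Harm[OF G]])
  obtain c where c: "x_du m ?Y = pconst c * ?X" using Suc unfolding multiple_of_def by blast
  have "x_du m ((S_u m ^^ Suc (Suc j)) G) = u_dx m (x_du m ?Y) + euler_x m ?Y - euler_u m ?Y"
    unfolding S_u_funpow_Suc[OF G, of "Suc j"] by (rule x_du_u_dx)
  also have "\<dots> = pconst (c + of_nat (a - Suc j) - of_nat (b + Suc j)) * ?Y"
    unfolding c using hY S_u_funpow_Suc[OF G, of j]
    by (simp add: linear_op_simps euler_x_Pspace euler_u_Pspace pconst_of_nat[symmetric]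
        pconst_add[symmetric] pconst_diff[symmetric] algebra_simps)
  finally show ?case by (simp add: multiple_of_pconst_mult_self)
qed

lemma CS_pow_Harm: "G \<in> Hspace m a b \<Longrightarrow> CS_pow m G i j \<in> Harm m (a - j + i) (b + j + i)"
  by (induction i) (auto simp: CS_pow_0 CS_pow_Suc S_u_funpow_Harm dest: C_op_Harm)

lemma S_u_CS_pow:
  assumes G: "G \<in> Hspace m a b"
  shows "multiple_of (S_u m (CS_pow m G i j)) (CS_pow m G i (Suc j))"
proof (induction i)
  case 0 then show ?case by (simp add: CS_pow_0 multiple_of_refl)
next
  case (Suc i)
  have "multiple_of (S_u m (C_op m (CS_pow m G i j))) (C_op m (S_u m (CS_pow m G i j)))"
    by (rule S_u_C_op_multiple[OF CS_pow_Harm[OF G]])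
  also have "multiple_of \<dots> (C_op m (CS_pow m G i (Suc j)))"
    by (rule multiple_of_C_op[OF CS_pow_Harm[OF G] Suc.IH])
  finally show ?case by (simp add: CS_pow_Suc)
qed

lemma S_x_CS_pow_0:
  assumes G: "G \<in> Hspace m a b"
  shows "S_x m (CS_pow m G i 0) = 0"
proof (induction i)
  case 0 then show ?case
    using S_x_eq_x_du[OF Hspace_Harm[OF G] Hspace_du_dx[OF G]] Hspace_x_du[OF G] by (simp add: CS_pow_0)
next
  case (Suc i)
  have "multiple_of (S_x m (C_op m (CS_pow m G i 0))) (C_op m (S_x m (CS_pow m G i 0)))"
    by (rule S_x_C_op_multiple[OF CS_pow_Harm[OF G]])
  then show ?case
    using C_op_eq_formula[OF m Harm_zero] unfolding CS_pow_Suc Suc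
    by (simp add: multiple_of_def C_formula_def Su_formula_def Sx_formula_def)
qed

lemma S_x_CS_pow_Suc:
  assumes G: "G \<in> Hspace m a b"
  shows "multiple_of (S_x m (CS_pow m G i (Suc j))) (CS_pow m G i j)"
proof (induction i)
  case 0
  have "S_x m (CS_pow m G 0 (Suc j)) = x_du m ((S_u m ^^ Suc j) G)"
    unfolding CS_pow_0 by (rule S_x_eq_x_du[OF S_u_funpow_Harm[OF G] du_dx_S_u_funpow[OF G]])
  then show ?case using x_du_S_u_funpow_Suc[OF G, of j] by (simp add: CS_pow_0)
next
  case (Suc i)
  have "multiple_of (S_x m (C_op m (CS_pow m G i (Suc j)))) (C_op m (S_x m (CS_pow m G i (Suc j))))"
    by (rule S_x_C_op_multiple[OF CS_pow_Harm[OF G]])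
  also have "multiple_of \<dots> (C_op m (CS_pow m G i j))"
    by (rule multiple_of_C_op[OF CS_pow_Harm[OF G] Suc.IH])
  finally show ?case by (simp add: CS_pow_Suc)
qed

lemma du_dx_CS_pow_0: "G \<in> Hspace m a b \<Longrightarrow> du_dx m (CS_pow m G 0 j) = 0"
  by (simp add: CS_pow_0 du_dx_S_u_funpow)

lemma C_op_zero[simp]: "C_op m 0 = 0"
  using C_op_eq_formula[OF m Harm_zero[of m 0 0]] by (simp add: C_formula_def Su_formula_def Sx_formula_def)

lemma S_u_zero[simp]: "S_u m 0 = 0"
  using S_u_eq_u_dx[OF Harm_zero[of m 0 0]] by simp

text \<open>The four terms of \<open>\<langle>\<partial>\<^sub>u,\<partial>\<^sub>x\<rangle> C g(i,j)\<close> are multiples of \<open>g(i,j)\<close>: the first by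
  hypothesis, the last two because \<open>S\<^sub>u\<close> and \<open>S\<^sub>x\<close> move along the chain in opposite
  directions.\<close>

lemma du_dx_CS_pow_Suc_step:
  assumes G: "G \<in> Hspace m a b"
    and C_du_dx: "multiple_of (C_op m (du_dx m (CS_pow m G i j))) (CS_pow m G i j)"
  shows "multiple_of (du_dx m (CS_pow m G (Suc i) j)) (CS_pow m G i j)"
proof -
  let ?h = "CS_pow m G i j"
  have h: "?h \<in> Harm m (a - j + i) (b + j + i)" by (rule CS_pow_Harm[OF G])
  obtain k s t r where e: "du_dx m (C_op m ?h) = pconst k * C_op m (du_dx m ?h) + pconst s * ?h
     - pconst t * S_x m (S_u m ?h) - pconst r * S_u m (S_x m ?h)"
    using du_dx_C_op_eq[OF h] .
  have "multiple_of (S_x m (S_u m ?h)) (S_x m (CS_pow m G i (Suc j)))"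
    by (rule multiple_of_S_x[OF CS_pow_Harm[OF G] S_u_CS_pow[OF G]])
  then have SxSu: "multiple_of (S_x m (S_u m ?h)) ?h"
    using S_x_CS_pow_Suc[OF G] by (rule multiple_of_trans)
  have SuSx: "multiple_of (S_u m (S_x m ?h)) ?h"
  proof (cases j)
    case 0
    then show ?thesis using S_x_CS_pow_0[OF G] by simp
  next
    case (Suc j')
    have "multiple_of (S_u m (S_x m ?h)) (S_u m (CS_pow m G i j'))"
      unfolding Suc by (rule multiple_of_S_u[OF CS_pow_Harm[OF G] S_x_CS_pow_Suc[OF G]])
    then show ?thesis using S_u_CS_pow[OF G] Suc by (metis multiple_of_trans)
  qed
  show ?thesis
    unfolding CS_pow_Suc e
    by (intro multiple_of_diff multiple_of_add multiple_of_pconst_mult C_du_dx SxSu SuSx multiple_of_refl)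
qed

lemma du_dx_CS_pow_Suc:
  assumes G: "G \<in> Hspace m a b"
  shows "multiple_of (du_dx m (CS_pow m G (Suc i) j)) (CS_pow m G i j)"
proof (induction i)
  case 0
  show ?case by (rule du_dx_CS_pow_Suc_step[OF G]) (simp add: du_dx_CS_pow_0[OF G])
next
  case (Suc i)
  have "multiple_of (C_op m (du_dx m (CS_pow m G (Suc i) j))) (CS_pow m G (Suc i) j)"
    using multiple_of_C_op[OF CS_pow_Harm[OF G] Suc.IH] by (simp only: CS_pow_Suc)
  then show ?case by (rule du_dx_CS_pow_Suc_step[OF G])
qed

text \<open>On \<open>ker \<langle>\<partial>\<^sub>u,\<partial>\<^sub>x\<rangle>\<close> the operator \<open>S\<^sub>u = \<langle>u,\<partial>\<^sub>x\<rangle>\<close> is adjoint to \<open>\<langle>x,\<partial>\<^sub>u\<rangle>\<close>,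
  which lowers the \<open>S\<^sub>u\<close>-chain of \<open>G\<close> and kills \<open>G\<close>.\<close>

lemma fischer_S_u_funpow_orthogonal:
  assumes H: "H \<in> Hspace m a1 b1" and G: "G \<in> Hspace m a2 b2"
  shows "j2 < j1 \<Longrightarrow> fischer ((S_u m ^^ j1) H) ((S_u m ^^ j2) G) = 0"
proof (induction j2 arbitrary: j1)
  case 0
  then obtain j1' where j1: "j1 = Suc j1'" by (cases j1) auto
  have "fischer ((S_u m ^^ j1) H) G = fischer ((S_u m ^^ j1') H) (x_du m G)"
    unfolding j1 S_u_funpow_Suc[OF H] by (rule fischer_u_dx_left)
  then show ?case using Hspace_x_du[OF G] by simp
next
  case (Suc j2)
  then obtain j1' where j1: "j1 = Suc j1'" and lt: "j2 < j1'" by (cases j1) auto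
  obtain c where c: "x_du m ((S_u m ^^ Suc j2) G) = pconst c * (S_u m ^^ j2) G"
    using x_du_S_u_funpow_Suc[OF G, of j2] unfolding multiple_of_def by blast
  have "fischer ((S_u m ^^ j1) H) ((S_u m ^^ Suc j2) G)
      = fischer ((S_u m ^^ j1') H) (x_du m ((S_u m ^^ Suc j2) G))"
    unfolding j1 S_u_funpow_Suc[OF H] by (rule fischer_u_dx_left)
  also have "\<dots> = c * fischer ((S_u m ^^ j1') H) ((S_u m ^^ j2) G)"
    unfolding c by (rule fischer_pconst_mult_right)
  also have "\<dots> = 0" using Suc.IH[OF lt] by simp
  finally show ?case .
qed

lemma fischer_CS_pow_0_left_orthogonal:
  assumes H: "H \<in> Hspace m a1 b1" and G: "G \<in> Hspace m a2 b2"
    and ne: "(0, j1) \<noteq> (i2, j2)"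
  shows "fischer (CS_pow m H 0 j1) (CS_pow m G i2 j2) = 0"
proof (cases i2)
  case 0
  then consider "j2 < j1" | "j1 < j2" using ne by fastforce
  then show ?thesis
  proof cases
    case 1
    then show ?thesis using fischer_S_u_funpow_orthogonal[OF H G] 0 by (simp add: CS_pow_0)
  next
    case 2
    then show ?thesis using fischer_S_u_funpow_orthogonal[OF G H] 0 fischer_commute_cnj
      by (metis complex_cnj_zero CS_pow_0)
  qed
next
  case (Suc i2')
  have "fischer (CS_pow m G (Suc i2') j2) (CS_pow m H 0 j1)
      = fischer (CS_pow m G i2' j2) (du_dx m (CS_pow m H 0 j1))"
    unfolding CS_pow_Suc
    by (rule fischer_C_op_left[OF CS_pow_Harm[OF G] Harm_harmonic[OF CS_pow_Harm[OF H]]])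
  then show ?thesis
    using du_dx_CS_pow_0[OF H] Suc fischer_commute_cnj by (metis complex_cnj_zero fischer_zero_right)
qed

lemma fischer_CS_pow_orthogonal:
  assumes H: "H \<in> Hspace m a1 b1" and G: "G \<in> Hspace m a2 b2"
  shows "(i1, j1) \<noteq> (i2, j2) \<Longrightarrow> fischer (CS_pow m H i1 j1) (CS_pow m G i2 j2) = 0"
proof (induction i1 arbitrary: i2)
  case 0
  then show ?case by (rule fischer_CS_pow_0_left_orthogonal[OF H G])
next
  case (Suc i1)
  show ?case
  proof (cases i2)
    case 0
    then have "fischer (CS_pow m G 0 j2) (CS_pow m H (Suc i1) j1) = 0"
      by (intro fischer_CS_pow_0_left_orthogonal[OF G H]) simp
    then show ?thesis using \<open>i2 = 0\<close> fischer_commute_cnj by (metis complex_cnj_zero)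
  next
    case (Suc i2')
    obtain d where d: "du_dx m (CS_pow m G (Suc i2') j2) = pconst d * CS_pow m G i2' j2"
      using du_dx_CS_pow_Suc[OF G] unfolding multiple_of_def by blast
    have "fischer (CS_pow m H (Suc i1) j1) (CS_pow m G (Suc i2') j2)
        = fischer (CS_pow m H i1 j1) (du_dx m (CS_pow m G (Suc i2') j2))"
      unfolding CS_pow_Suc[of m H]
      by (rule fischer_C_op_left[OF CS_pow_Harm[OF H] Harm_harmonic[OF CS_pow_Harm[OF G]]])
    also have "\<dots> = d * fischer (CS_pow m H i1 j1) (CS_pow m G i2' j2)"
      unfolding d by (rule fischer_pconst_mult_right)
    also have "\<dots> = 0" using Suc.IH[of i2'] Suc.prems \<open>i2 = Suc i2'\<close> by simp
    finally show ?thesis using Suc by simp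
  qed
qed
end

theorem theorem6p2:
  fixes m k l \<alpha>1 \<alpha>2 \<beta>1 \<beta>2 :: nat and H G :: cpoly
  assumes "m > 4"
    and "k \<ge> l"
    and "\<alpha>1 \<le> l" and "\<alpha>2 \<le> l"
    and "\<beta>1 \<le> l - \<alpha>1" and "\<beta>2 \<le> l - \<alpha>2"
    and "(\<alpha>1, \<beta>1) \<noteq> (\<alpha>2, \<beta>2)"
    and "H \<in> Hspace m (k - \<alpha>1 + \<beta>1) (l - \<alpha>1 - \<beta>1)"
    and "G \<in> Hspace m (k - \<alpha>2 + \<beta>2) (l - \<alpha>2 - \<beta>2)"
  shows "fischer ((C_op m ^^ \<alpha>1) ((S_u m ^^ \<beta>1) H))
                 ((C_op m ^^ \<alpha>2) ((S_u m ^^ \<beta>2) G)) = 0"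
proof -
  have "m > 2" using \<open>m > 4\<close> by simp
  from fischer_CS_pow_orthogonal[OF this assms(8,9,7)] show ?thesis
    by (simp add: CS_pow_def)
qed

end
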